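(* Every permutation class containing only finitely many simple permutations is finitely based, i.e. its basis is finite.
   Context: A permutation $\pi$ contains $\sigma$ ($\sigma\le\pi$) if some subsequence of $\pi$ has the same relative order as $\sigma$. A permutation class is a downset under $\le$; its basis is the set of $\le$-minimal permutations not in the class. An interval of a permutation is a set of contiguous positions whose values form a contiguous set; a permutation of length $n$ is simple if its only intervals have sizes $0,1,n$. *)

theory Defs
  imports Main
begin

definition is_perm :: "nat list \<Rightarrow> bool" where
  "is_perm p \<longleftrightarrow> distinct p \<and> set p = {0..<length p}"

definition order_iso :: "nat list \<Rightarrow> nat list \<Rightarrow> bool" where
  "order_iso xs ys \<longleftrightarrow> length xs = length ys \<and>
     (\<forall>i < length xs. \<forall>j < length xs. xs ! i < xs ! j \<longleftrightarrow> ys ! i < ys ! j)"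

definition contains :: "nat list \<Rightarrow> nat list \<Rightarrow> bool" (infix "\<preceq>" 50) where
  "\<sigma> \<preceq> \<pi> \<longleftrightarrow> (\<exists>I. I \<subseteq> {0..<length \<pi>} \<and> order_iso \<sigma> (nths \<pi> I))"

definition perm_class :: "nat list set \<Rightarrow> bool" where
  "perm_class C \<longleftrightarrow> (\<forall>\<pi>\<in>C. is_perm \<pi>) \<and>
     (\<forall>\<pi>\<in>C. \<forall>\<sigma>. is_perm \<sigma> \<and> \<sigma> \<preceq> \<pi> \<longrightarrow> \<sigma> \<in> C)"

definition basis :: "nat list set \<Rightarrow> nat list set" where
  "basis C = {\<beta>. is_perm \<beta> \<and> \<beta> \<notin> C \<and>
     (\<forall>\<sigma>. is_perm \<sigma> \<and> \<sigma> \<preceq> \<beta> \<and> \<sigma> \<noteq> \<beta> \<longrightarrow> \<sigma> \<in> C)}"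

definition is_interval :: "nat list \<Rightarrow> nat set \<Rightarrow> bool" where
  "is_interval p S \<longleftrightarrow> (\<exists>i j. S = {i..<j} \<and> j \<le> length p \<and>
     (\<exists>a b. (\<lambda>k. p ! k) ` S = {a..<b}))"

definition simple :: "nat list \<Rightarrow> bool" where
  "simple p \<longleftrightarrow> is_perm p \<and>
     (\<forall>S. is_interval p S \<longrightarrow> card S \<in> {0, 1, length p})"

end

theory Submission
  imports Defs "HOL-Library.Infinite_Set"
begin

(* 1. Schmerl-Trotter extension: a simple subset X (at least 3 points) of a simple point set
      P extends to a simple subset of P with at most two more points.  With the fact that
      every simple permutation of length at least 4 contains a simple 4-point subset
      (3142 or 2413), this gives the weak Schmerl-Trotter bound: if all proper simple
      subsets of a simple permutation have at most m points, its length is at most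
      max 4 (m + 2).
   2. Containment is expressed by order embeddings between position sets.
   3. Substitution decomposition: every permutation of length at least 2 is an inflation
      of a simple skeleton, and inflation is monotone in the segments.
   4. An abstract Nash-Williams minimal bad sequence argument shows that the permutations
      whose simple subpatterns have at most m points are well-quasi-ordered.

   For the theorem, let m bound the lengths of the simple permutations of C.  All proper
   subpatterns of a basis element lie in C, so a simple basis element has length at most
   max 4 (m + 2) by 1, and a non-simple one has only simple subpatterns of length at most m;
   the latter form an antichain in the well-quasi-order of 4, so there are finitely many. *)

text \<open>A permutation is viewed as a finite point set: a set X of positions together with
  the value map v.  A point q separates a from b if it lies strictly between them in position
  or in value.\<close>
definition separates :: "(nat \<Rightarrow> nat) \<Rightarrow> nat \<Rightarrow> nat \<Rightarrow> nat \<Rightarrow> bool" where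
  "separates v a q b \<longleftrightarrow>
     (a < q \<and> q < b) \<or> (b < q \<and> q < a) \<or> (v a < v q \<and> v q < v b) \<or> (v b < v q \<and> v q < v a)"

text \<open>A block of X is a subset J that no point of X outside J separates; for the full range
  of positions of a permutation these are exactly its intervals.\<close>
definition is_block :: "(nat \<Rightarrow> nat) \<Rightarrow> nat set \<Rightarrow> nat set \<Rightarrow> bool" where
  "is_block v X J \<longleftrightarrow> J \<subseteq> X \<and> (\<forall>q\<in>X - J. \<forall>a\<in>J. \<forall>b\<in>J. \<not> separates v a q b)"

definition simple_on :: "(nat \<Rightarrow> nat) \<Rightarrow> nat set \<Rightarrow> bool" where
  "simple_on v X \<longleftrightarrow> (\<forall>J. is_block v X J \<longrightarrow> card J \<le> 1 \<or> J = X)"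

lemma separates_sym: "separates v a q b = separates v b q a"
  unfolding separates_def by auto

lemma separates_irrefl: "\<not> separates v a q a"
  unfolding separates_def by auto

lemma separates_distinct: "separates v a q b \<Longrightarrow> q \<noteq> a \<and> q \<noteq> b"
  unfolding separates_def by auto

lemma separates_split:
  "separates v a q b \<Longrightarrow> t \<noteq> q \<Longrightarrow> v t \<noteq> v q \<Longrightarrow> separates v a q t \<or> separates v t q b"
  unfolding separates_def by (cases "t < q"; cases "v t < v q"; auto)

lemma separates_three_ways:
  "separates v a t b \<Longrightarrow> z \<noteq> a \<Longrightarrow> z \<noteq> b \<Longrightarrow> v z \<noteq> v a \<Longrightarrow> v z \<noteq> v b
   \<Longrightarrow> separates v a z b \<or> separates v z a t \<or> separates v t b z"
  unfolding separates_def
  by (cases "z < a"; cases "z < b"; cases "v z < v a"; cases "v z < v b"; auto)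

lemma block_closed:
  "is_block v X J \<Longrightarrow> x \<in> J \<Longrightarrow> y \<in> J \<Longrightarrow> q \<in> X \<Longrightarrow> separates v x q y \<Longrightarrow> q \<in> J"
  unfolding is_block_def by blast

lemma block_restrict: "is_block v X J \<Longrightarrow> Y \<subseteq> X \<Longrightarrow> is_block v Y (J \<inter> Y)"
  unfolding is_block_def by blast

lemma block_union:
  assumes "is_block v X J1" "is_block v X J2" "J1 \<inter> J2 \<noteq> {}" "inj_on v X"
  shows "is_block v X (J1 \<union> J2)"
proof -
  obtain c where c: "c \<in> J1" "c \<in> J2" using assms(3) by blast
  have "\<not> separates v a q b"
    if q: "q \<in> X - (J1 \<union> J2)" and a: "a \<in> J1 \<union> J2" and b: "b \<in> J1 \<union> J2" for q a b
  proof
    assume h: "separates v a q b"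
    have cX: "c \<in> X" "q \<in> X" using c assms(1) q unfolding is_block_def by auto
    have qc: "c \<noteq> q" "v c \<noteq> v q" using cX c q assms(4) unfolding inj_on_def by auto
    from separates_split[OF h qc] have "separates v a q c \<or> separates v c q b" .
    moreover have "\<not> separates v a q c" using a c q assms(1,2) unfolding is_block_def by blast
    moreover have "\<not> separates v c q b" using b c q assms(1,2) unfolding is_block_def by blast
    ultimately show False by blast
  qed
  then show ?thesis using assms(1,2) unfolding is_block_def by blast
qed

text \<open>Simplicity of X plus two new points z, w only has to be checked on the blocks that
  meet X in the empty set, a single point, or all of X.\<close>
lemma two_point_extension:
  assumes "simple_on v X" "finite X" "z \<notin> X" "w \<notin> X"
    and Y: "Y = insert z (insert w X)"
    and g1: "\<not> is_block v Y X" and g2: "\<not> is_block v Y (insert z X)"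
    and g3: "\<not> is_block v Y (insert w X)" and g4: "\<not> is_block v Y {z,w}"
    and g5: "\<forall>u\<in>X. \<not> is_block v Y {u,z}" and g6: "\<forall>u\<in>X. \<not> is_block v Y {u,w}"
    and g7: "\<forall>u\<in>X. \<not> is_block v Y {u,z,w}"
  shows "simple_on v Y"
  unfolding simple_on_def
proof (intro allI impI)
  fix J assume J: "is_block v Y J"
  have Jd: "J = (J \<inter> X) \<union> (J \<inter> {z,w})" using J Y unfolding is_block_def by auto
  have "is_block v X (J \<inter> X)" using block_restrict[OF J] Y by auto
  then have cJ: "card (J \<inter> X) \<le> 1 \<or> J \<inter> X = X" using assms(1) unfolding simple_on_def by blast
  show "card J \<le> 1 \<or> J = Y"
  proof (cases "J \<inter> X = X")
    case True
    then have "J = X \<or> J = insert z X \<or> J = insert w X \<or> J = Y" using Jd Y by auto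
    then show ?thesis using J g1 g2 g3 by auto
  next
    case False
    with cJ assms(2) have "J \<inter> X = {} \<or> (\<exists>u. J \<inter> X = {u})"
      by (metis card_0_eq card_1_singletonE finite_Int le_Suc_eq One_nat_def le_zero_eq)
    then consider "J \<subseteq> {z,w}" | u where "u \<in> X" "J \<subseteq> {u,z,w}" "u \<in> J"
      using Jd by blast
    then show ?thesis
    proof cases
      case 1
      then have "J = {} \<or> J = {z} \<or> J = {w} \<or> J = {z,w}" by auto
      then show ?thesis using J g4 by auto
    next
      case 2
      then have "J = {u} \<or> J = {u,z} \<or> J = {u,w} \<or> J = {u,z,w}" by auto
      then show ?thesis using J g5 g6 g7 2(1) by auto
    qed
  qed
qed

text \<open>The extension problem: X is a simple subset, of size at least 3, of a simple finite
  injective point set P.  Following Schmerl and Trotter, X extends to a simple subset of P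
  with at most two more points.\<close>
locale extension_problem =
  fixes v :: "nat \<Rightarrow> nat" and P X :: "nat set"
  assumes finP: "finite P" and inj: "inj_on v P" and XP: "X \<subseteq> P"
    and simpleX: "simple_on v X" and cardX: "3 \<le> card X"
    and simpleP: "simple_on v P" and XneP: "X \<noteq> P"
begin

definition corner :: "nat \<Rightarrow> bool" where
  "corner z \<longleftrightarrow> is_block v (insert z X) X"

definition twin :: "nat \<Rightarrow> nat \<Rightarrow> bool" where
  "twin t z \<longleftrightarrow> is_block v (insert z X) {t, z}"

lemma finX: "finite X"
  using finP XP finite_subset by blast

lemma values_differ: "x \<in> P \<Longrightarrow> y \<in> P \<Longrightarrow> x \<noteq> y \<Longrightarrow> v x \<noteq> v y"
  using inj unfolding inj_on_def by blast

lemma one_point_extension: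
  assumes z: "z \<in> P" "z \<notin> X" and ns: "\<not> simple_on v (insert z X)"
  shows "corner z \<or> (\<exists>t\<in>X. twin t z)"
proof -
  from ns obtain J where "is_block v (insert z X) J" "\<not> (card J \<le> 1 \<or> J = insert z X)"
    unfolding simple_on_def by blast
  then have J: "is_block v (insert z X) J" "card J > 1" "J \<noteq> insert z X" by auto
  have JY: "J \<subseteq> insert z X" using J unfolding is_block_def by auto
  have "is_block v X (J \<inter> X)" using block_restrict[OF J(1)] by auto
  then have cJ: "card (J \<inter> X) \<le> 1 \<or> J \<inter> X = X" using simpleX unfolding simple_on_def by blast
  show ?thesis
  proof (cases "J \<inter> X = X")
    case True
    then have "J = X" using J(3) JY by auto
    then show ?thesis using J(1) unfolding corner_def by auto
  next
    case False
    then have c1: "card (J \<inter> X) \<le> 1" using cJ by auto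
    have finJ: "finite J" using JY finX finite_subset by blast
    have "z \<in> J"
    proof (rule ccontr)
      assume "z \<notin> J" then have "J = J \<inter> X" using JY by auto
      then show False using c1 J(2) by simp
    qed
    then have Jd: "J = insert z (J \<inter> X)" using JY by auto
    then have "card J = Suc (card (J \<inter> X))" using finJ z(2)
      by (metis IntD2 card_insert_disjoint finite_Int)
    then have "card (J \<inter> X) = 1" using J(2) c1 by simp
    then obtain t where "J \<inter> X = {t}" by (metis card_1_singletonE)
    then have "J = {t, z}" "t \<in> X" using Jd by auto
    then show ?thesis using J(1) unfolding twin_def by auto
  qed
qed

text \<open>A twin is never a corner: otherwise X - {t} would be a nontrivial block of X.\<close>
lemma twin_not_corner:
  assumes t: "t \<in> X" and z: "z \<in> P" "z \<notin> X" and tw: "twin t z"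
  shows "\<not> corner z"
proof
  assume co: "corner z"
  have "is_block v X (X - {t})"
    unfolding is_block_def
  proof (intro conjI ballI)
    fix q a b assume q: "q \<in> X - (X - {t})" and a: "a \<in> X - {t}" and b: "b \<in> X - {t}"
    show "\<not> separates v a q b"
    proof
      assume h: "separates v a q b"
      have ne: "z \<noteq> a" "z \<noteq> b" "v z \<noteq> v a" "v z \<noteq> v b"
        using a b z values_differ XP by auto
      from separates_three_ways[OF h ne] q
      have "separates v a z b \<or> separates v z a t \<or> separates v t b z" by auto
      moreover have "\<not> separates v a z b" using co a b z unfolding corner_def is_block_def by auto
      moreover have "\<not> separates v z a t" using tw a z unfolding twin_def is_block_def by auto
      moreover have "\<not> separates v t b z" using tw b z unfolding twin_def is_block_def by auto
      ultimately show False by blast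
    qed
  qed auto
  then have "card (X - {t}) \<le> 1 \<or> X - {t} = X" using simpleX unfolding simple_on_def by blast
  then show False using t cardX finX by auto
qed

text \<open>A point is a twin of at most one point of X: two twin pairs sharing z would merge
  into the nontrivial block {s, t} of X.\<close>
lemma twin_unique:
  assumes "t \<in> X" "s \<in> X" "z \<in> P" "z \<notin> X" "twin t z" "twin s z"
  shows "s = t"
proof (rule ccontr)
  assume st: "s \<noteq> t"
  have "inj_on v (insert z X)" using inj assms(3) XP by (meson inj_on_subset insert_subset)
  then have "is_block v (insert z X) ({t, z} \<union> {s, z})"
    using block_union assms(5,6) unfolding twin_def by blast
  then have "is_block v X (({t, z} \<union> {s, z}) \<inter> X)" using block_restrict by blast
  moreover have "({t, z} \<union> {s, z}) \<inter> X \<subseteq> {s, t}" "{s, t} \<subseteq> ({t, z} \<union> {s, z}) \<inter> X"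
    using assms(1,2,4) by auto
  ultimately have "is_block v X {s, t}" by (metis subset_antisym)
  then have "card {s, t} \<le> 1 \<or> {s, t} = X" using simpleX unfolding simple_on_def by blast
  then show False using st cardX by auto
qed

lemma not_corner_separated:
  assumes "z \<in> P" "\<not> corner z"
  shows "\<exists>a\<in>X. \<exists>b\<in>X. separates v a z b"
proof -
  have "z \<notin> X" using assms(2) unfolding corner_def is_block_def using insert_absorb by fastforce
  then show ?thesis using assms(2) unfolding corner_def is_block_def by auto
qed

lemma twin_from_block:
  assumes "is_block v Y J" "insert z X \<subseteq> Y" "J \<inter> insert z X = {u, z}"
  shows "twin u z"
  using block_restrict[OF assms(1,2)] assms(3) unfolding twin_def by simp

lemma corner_separates_twin:
  assumes w: "w \<in> P" "w \<notin> X" "corner w" and h: "separates v a w b"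
    and a: "a \<in> P" "a \<in> X \<or> (a \<notin> X \<and> (\<exists>t\<in>X. twin t a))"
    and b: "b \<in> P" "b \<in> X \<or> (b \<notin> X \<and> (\<exists>t\<in>X. twin t b))"
  shows "\<exists>t z. t \<in> X \<and> z \<in> P - X \<and> twin t z \<and> separates v t w z"
proof -
  have cw: "\<not> separates v x w y" if "x \<in> X" "y \<in> X" for x y
    using w that unfolding corner_def is_block_def by auto
  have ne: "x \<noteq> w \<and> v x \<noteq> v w" if "x \<in> X" for x
    using that w values_differ XP by auto
  have reduce: "separates v t w y \<or> (\<exists>z\<in>P - X. twin t z \<and> separates v t w z)"
    if "separates v x w y" "t \<in> X" "twin t x" "x \<in> P" "x \<notin> X" for x y t
  proof -
    from separates_split[OF that(1), of t] ne[OF that(2)]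
    have "separates v x w t \<or> separates v t w y" by auto
    then show ?thesis using that separates_sym by blast
  qed
  have "separates v a w b" "separates v b w a" using h separates_sym by blast+
  then consider (inside) x y where "x \<in> X" "y \<in> X" "separates v x w y"
    | (twin) t z where "t \<in> X" "z \<in> P - X" "twin t z" "separates v t w z"
    using a b reduce separates_sym by metis
  then show ?thesis using cw by cases blast+
qed

lemma corner_twin_extension:
  assumes t: "t \<in> X" and z: "z \<in> P" "z \<notin> X" "twin t z"
    and w: "w \<in> P" "w \<notin> X" "corner w" and sep: "separates v t w z"
  shows "simple_on v (insert z (insert w X))" (is "simple_on v ?Y")
proof -
  have "\<not> corner z" using twin_not_corner t z by blast
  then have zw: "z \<noteq> w" using w by auto
  obtain a1 b1 where ab1: "a1 \<in> X" "b1 \<in> X" "separates v a1 z b1"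
    using not_corner_separated[OF z(1) \<open>\<not> corner z\<close>] by blast
  have no_twin_w: "\<not> twin u w" if "u \<in> X" for u
    using twin_not_corner[OF that w(1,2)] w(3) by blast
  show ?thesis
  proof (rule two_point_extension[OF simpleX finX z(2) w(2) refl])
    show "\<not> is_block v ?Y X" using ab1 z(2) unfolding is_block_def by blast
    have "w \<in> ?Y - insert z X" using zw w(2) by auto
    then show "\<not> is_block v ?Y (insert z X)" using t sep unfolding is_block_def by blast
    show "\<not> is_block v ?Y (insert w X)" using ab1 z(2) zw unfolding is_block_def by blast
    show "\<not> is_block v ?Y {z, w}"
    proof
      assume zw_block: "is_block v ?Y {z, w}"
      have "separates v a1 w b1 \<or> separates v w a1 z \<or> separates v z b1 w"
        using separates_three_ways[OF ab1(3), of w] values_differ ab1 w XP by auto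
      moreover have "\<not> separates v a1 w b1" using w ab1 unfolding corner_def is_block_def by blast
      moreover have "\<not> separates v w a1 z" "\<not> separates v z b1 w"
        using zw_block ab1 z(2) w(2) unfolding is_block_def by auto
      ultimately show False by blast
    qed
    show "\<forall>u\<in>X. \<not> is_block v ?Y {u, z}"
    proof (intro ballI notI)
      fix u assume u: "u \<in> X" and uz: "is_block v ?Y {u, z}"
      have "twin u z" by (rule twin_from_block[OF uz]) (use u in auto)
      then have "u = t" using twin_unique t z u by blast
      moreover have "w \<in> ?Y - {u, z}" using zw w(2) u by auto
      ultimately show False using uz sep unfolding is_block_def by blast
    qed
    show "\<forall>u\<in>X. \<not> is_block v ?Y {u, w}"
    proof (intro ballI notI)
      fix u assume u: "u \<in> X" and uw: "is_block v ?Y {u, w}"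
      have "twin u w" by (rule twin_from_block[OF uw]) (use u in auto)
      then show False using no_twin_w u by blast
    qed
    show "\<forall>u\<in>X. \<not> is_block v ?Y {u, z, w}"
    proof (intro ballI notI)
      fix u assume u: "u \<in> X" and uzw: "is_block v ?Y {u, z, w}"
      have "twin u w" by (rule twin_from_block[OF uzw]) (use u z(2) zw in auto)
      then show False using no_twin_w u by blast
    qed
  qed
qed

text \<open>Corner case: if every new point is a corner or a twin and some corner exists, then
  some corner separates the set of X and all twins, and the previous lemma applies.\<close>
lemma extension_with_corner:
  assumes all: "\<forall>z\<in>P - X. corner z \<or> (\<exists>t\<in>X. twin t z)"
    and w0: "w0 \<in> P" "w0 \<notin> X" "corner w0"
  shows "\<exists>z w. z \<in> P - X \<and> w \<in> P \<and> simple_on v (insert z (insert w X))"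
proof -
  define W where "W = X \<union> {z\<in>P - X. \<not> corner z}"
  have WP: "W \<subseteq> P" "W \<noteq> P" "X \<subseteq> W" using W_def XP w0 by auto
  have "card X \<le> card W" using WP finP by (meson card_mono finite_subset)
  then have "\<not> is_block v P W" using simpleP WP cardX unfolding simple_on_def by fastforce
  then obtain w a b where wab: "w \<in> P" "w \<notin> W" "a \<in> W" "b \<in> W" "separates v a w b"
    using WP unfolding is_block_def by blast
  have w: "w \<notin> X" "corner w" using wab W_def by auto
  have "x \<in> P \<and> (x \<in> X \<or> (x \<notin> X \<and> (\<exists>t\<in>X. twin t x)))" if "x \<in> W" for x
    using that W_def all XP by auto
  then obtain t z where tz: "t \<in> X" "z \<in> P - X" "twin t z" "separates v t w z"
    using corner_separates_twin[OF wab(1) w wab(5)] wab(3,4) by blast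
  then show ?thesis using corner_twin_extension[OF tz(1) _ _ tz(3) wab(1) w tz(4)] wab(1)
    by blast
qed

text \<open>Twin case: if every new point is a twin, then for some t \<in> X the set of t and its
  twins is not a block of P, so a point w outside it separates t from one of its twins.\<close>
lemma twin_separated:
  assumes all: "\<forall>z\<in>P - X. \<exists>t\<in>X. twin t z"
  shows "\<exists>t z w. t \<in> X \<and> z \<in> P - X \<and> w \<in> P - X \<and> twin t z \<and> \<not> twin t w
    \<and> separates v t w z"
proof -
  obtain z0 where z0: "z0 \<in> P - X" using XP XneP by blast
  obtain t where t: "t \<in> X" "twin t z0" using all z0 by blast
  define A where "A = insert t {z\<in>P - X. twin t z}"
  have AP: "A \<subseteq> P" using A_def t XP by auto
  have "\<not> X \<subseteq> {t}"
  proof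
    assume "X \<subseteq> {t}"
    then have "card X \<le> card {t}" by (intro card_mono) auto
    then show False using cardX by simp
  qed
  then have "A \<noteq> P" using A_def XP by auto
  moreover have "card {t, z0} \<le> card A"
    using A_def z0 t AP finP by (intro card_mono) (auto intro: finite_subset)
  moreover have "card {t, z0} = 2" using t(1) z0 by (cases "t = z0") auto
  ultimately have "\<not> is_block v P A" using simpleP AP unfolding simple_on_def by fastforce
  then obtain w a b where wab: "w \<in> P" "w \<notin> A" "a \<in> A" "b \<in> A" "separates v a w b"
    using AP unfolding is_block_def by blast
  have "w \<noteq> t" using wab(2) A_def by auto
  then have wt: "t \<noteq> w" "v t \<noteq> v w" using values_differ wab(1) t(1) XP by blast+
  from separates_split[OF wab(5) wt] have "separates v t w a \<or> separates v t w b"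
    using separates_sym[of v a w t] by blast
  then obtain z where z: "z \<in> A" "separates v t w z" using wab(3,4) by blast
  then have "z \<noteq> t" using separates_irrefl by blast
  then have z': "z \<in> P - X" "twin t z" using z(1) A_def by auto
  have "w \<notin> X"
  proof
    assume "w \<in> X"
    then have "w \<in> insert z X - {t, z}" using wt z(2) separates_distinct by blast
    then show False using z'(2) z(2) unfolding twin_def is_block_def by blast
  qed
  then show ?thesis using t(1) z' z(2) wab(1,2) A_def by blast
qed

text \<open>Two twin pairs (t, z) and (s, w) with different partners in X cannot make {z, w} a
  block: otherwise {t, s} would be a nontrivial block of X.\<close>
lemma twin_pair_not_block:
  assumes t: "t \<in> X" "s \<in> X" "s \<noteq> t" and z: "z \<in> P - X" "twin t z"
    and w: "w \<in> P - X" "twin s w"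
  shows "\<not> is_block v (insert z (insert w X)) {z, w}"
proof
  assume zw_block: "is_block v (insert z (insert w X)) {z, w}"
  have "is_block v X {t, s}"
    unfolding is_block_def
  proof (intro conjI ballI)
    fix q a b assume q: "q \<in> X - {t, s}" and a: "a \<in> {t, s}" and b: "b \<in> {t, s}"
    have nq1: "\<not> separates v t q z" using q z unfolding twin_def is_block_def by auto
    have nq2: "\<not> separates v z q w" using q zw_block z w unfolding is_block_def by auto
    have nq3: "\<not> separates v s q w" using q w unfolding twin_def is_block_def by auto
    have "q \<in> P" "q \<noteq> z" "q \<noteq> w" using q z(1) w(1) XP by auto
    then have qzw: "q \<noteq> z" "q \<noteq> w" "v q \<noteq> v z" "v q \<noteq> v w"
      using values_differ z(1) w(1) by blast+
    have "\<not> separates v t q s"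
    proof
      assume "separates v t q s"
      with separates_split[of v t q s z] qzw nq1 have "separates v z q s" by auto
      with separates_split[of v z q s w] qzw have "separates v z q w \<or> separates v w q s" by auto
      then show False using nq2 nq3 separates_sym[of v w q s] by blast
    qed
    then show "\<not> separates v a q b" using a b separates_irrefl separates_sym by auto
  qed (use t in auto)
  then have "card {t, s} \<le> 1 \<or> {t, s} = X" using simpleX unfolding simple_on_def by blast
  then show False using t(3) cardX by auto
qed

lemma twin_twin_extension:
  assumes t: "t \<in> X" "s \<in> X" "s \<noteq> t" and z: "z \<in> P - X" "twin t z"
    and w: "w \<in> P - X" "twin s w" and sep: "separates v t w z"
  shows "simple_on v (insert z (insert w X))" (is "simple_on v ?Y")
proof -
  have zX: "z \<notin> X" and wX: "w \<notin> X" using z w by auto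
  have zw: "z \<noteq> w" using separates_distinct[OF sep] by blast
  have szw: "separates v s z w"
  proof -
    have "separates v t s z \<or> separates v s t w \<or> separates v w z s"
      using separates_three_ways[OF sep, of s] t z(1) XP values_differ by (metis Diff_iff subsetD)
    moreover have "\<not> separates v t s z" using z t unfolding twin_def is_block_def by auto
    moreover have "\<not> separates v s t w" using w t unfolding twin_def is_block_def by auto
    ultimately show ?thesis using separates_sym[of v w z s] by blast
  qed
  have "\<not> corner z" using twin_not_corner t(1) z by blast
  then obtain a1 b1 where ab1: "a1 \<in> X" "b1 \<in> X" "separates v a1 z b1"
    using not_corner_separated z(1) by blast
  show ?thesis
  proof (rule two_point_extension[OF simpleX finX zX wX refl])
    show "\<not> is_block v ?Y X" using ab1 zX unfolding is_block_def by blast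
    have "w \<in> ?Y - insert z X" "z \<in> ?Y - insert w X" using zw zX wX by auto
    then show "\<not> is_block v ?Y (insert z X)" "\<not> is_block v ?Y (insert w X)"
      using t sep szw unfolding is_block_def by blast+
    show "\<not> is_block v ?Y {z, w}" by (rule twin_pair_not_block[OF t z w])
    show "\<forall>u\<in>X. \<not> is_block v ?Y {u, z}"
    proof (intro ballI notI)
      fix u assume u: "u \<in> X" and uz: "is_block v ?Y {u, z}"
      have "twin u z" by (rule twin_from_block[OF uz]) (use u in auto)
      then have "u = t" using twin_unique t(1) z zX u by blast
      moreover have "w \<in> ?Y - {u, z}" using zw wX u by auto
      ultimately show False using uz sep unfolding is_block_def by blast
    qed
    show "\<forall>u\<in>X. \<not> is_block v ?Y {u, w}"
    proof (intro ballI notI)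
      fix u assume u: "u \<in> X" and uw: "is_block v ?Y {u, w}"
      have "twin u w" by (rule twin_from_block[OF uw]) (use u in auto)
      then have "u = s" using twin_unique t(2) w wX u by blast
      moreover have "z \<in> ?Y - {u, w}" using zw zX u by auto
      ultimately show False using uw szw unfolding is_block_def by blast
    qed
    show "\<forall>u\<in>X. \<not> is_block v ?Y {u, z, w}"
    proof (intro ballI notI)
      fix u assume u: "u \<in> X" and uzw: "is_block v ?Y {u, z, w}"
      have "twin u w" by (rule twin_from_block[OF uzw]) (use u zX zw in auto)
      moreover have "twin u z" by (rule twin_from_block[OF uzw]) (use u wX zw in auto)
      ultimately show False using twin_unique t z w u zX wX by blast
    qed
  qed
qed

theorem simple_extension: "\<exists>Y. X \<subset> Y \<and> Y \<subseteq> P \<and> card Y \<le> card X + 2 \<and> simple_on v Y"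
proof -
  have "\<exists>z w. z \<in> P - X \<and> w \<in> P \<and> simple_on v (insert z (insert w X))"
  proof (cases "\<exists>z\<in>P - X. simple_on v (insert z X)")
    case True
    then obtain z where "z \<in> P - X" "simple_on v (insert z X)" by blast
    then show ?thesis by (intro exI[of _ z]) auto
  next
    case False
    then have all: "\<forall>z\<in>P - X. corner z \<or> (\<exists>t\<in>X. twin t z)" using one_point_extension by blast
    show ?thesis
    proof (cases "\<exists>w\<in>P - X. corner w")
      case True
      then show ?thesis using extension_with_corner[OF all] by blast
    next
      case False
      with all have twins: "\<forall>z\<in>P - X. \<exists>t\<in>X. twin t z" by blast
      obtain t z w where tzw: "t \<in> X" "z \<in> P - X" "w \<in> P - X" "twin t z" "\<not> twin t w"
        "separates v t w z" using twin_separated[OF twins] by blast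
      obtain s where s: "s \<in> X" "twin s w" using twins tzw(3) by blast
      with tzw(5) have "s \<noteq> t" by blast
      with twin_twin_extension[OF tzw(1) s(1) _ tzw(2,4) tzw(3) s(2) tzw(6)]
      have "simple_on v (insert z (insert w X))" by blast
      then show ?thesis using tzw(2,3) by blast
    qed
  qed
  then obtain z w where zw: "z \<in> P - X" "w \<in> P" "simple_on v (insert z (insert w X))" by blast
  have "card (insert z (insert w X)) \<le> card X + 2" using finX by (simp add: card_insert_if)
  then show ?thesis using zw XP by (intro exI[of _ "insert z (insert w X)"]) auto
qed

end

text \<open>The patterns 2413 and 3142 are simple; this is the four-point set of positions
  p0 < p1 < p2 < p3 with values in the order p1, p3, p0, p2 (pattern 3142).\<close>
lemma four_point_simple:
  assumes pos: "p0 < p1" "p1 < p2" "p2 < p3" and val: "v p1 < v p3" "v p3 < v p0" "v p0 < v p2"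
  shows "simple_on v {p0, p1, p2, p3}"
  unfolding simple_on_def
proof (intro allI impI)
  fix J assume J: "is_block v {p0, p1, p2, p3} J"
  let ?T = "{p0, p1, p2, p3}"
  have JT: "J \<subseteq> ?T" using J unfolding is_block_def by auto
  have cl: "\<And>x y q. x \<in> J \<Longrightarrow> y \<in> J \<Longrightarrow> q \<in> ?T \<Longrightarrow> separates v x q y \<Longrightarrow> q \<in> J"
    using block_closed[OF J] by blast
  text \<open>Any two of the four points are separated by a third, which forces it into J.\<close>
  have i01: "p0 \<in> J \<Longrightarrow> p1 \<in> J \<Longrightarrow> p3 \<in> J"
    using cl[of p0 p1 p3] pos val unfolding separates_def by auto
  have i03: "p0 \<in> J \<Longrightarrow> p3 \<in> J \<Longrightarrow> p1 \<in> J \<and> p2 \<in> J"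
    using cl[of p0 p3 p1] cl[of p0 p3 p2] pos val unfolding separates_def by auto
  have i02: "p0 \<in> J \<Longrightarrow> p2 \<in> J \<Longrightarrow> p1 \<in> J"
    using cl[of p0 p2 p1] pos val unfolding separates_def by auto
  have i12: "p1 \<in> J \<Longrightarrow> p2 \<in> J \<Longrightarrow> p3 \<in> J \<and> p0 \<in> J"
    using cl[of p1 p2 p3] cl[of p1 p2 p0] pos val unfolding separates_def by auto
  have i13: "p1 \<in> J \<Longrightarrow> p3 \<in> J \<Longrightarrow> p2 \<in> J"
    using cl[of p1 p3 p2] pos val unfolding separates_def by auto
  have i23: "p2 \<in> J \<Longrightarrow> p3 \<in> J \<Longrightarrow> p0 \<in> J"
    using cl[of p2 p3 p0] pos val unfolding separates_def by auto
  show "card J \<le> 1 \<or> J = ?T"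
  proof (cases "\<exists>x\<in>J. \<exists>y\<in>J. x \<noteq> y")
    case True
    then obtain x y where xy: "x \<in> J" "y \<in> J" "x \<noteq> y" by blast
    then have "x = p0 \<or> x = p1 \<or> x = p2 \<or> x = p3" "y = p0 \<or> y = p1 \<or> y = p2 \<or> y = p3"
      using JT by auto
    then have "(p0 \<in> J \<and> p3 \<in> J) \<or> (p1 \<in> J \<and> p2 \<in> J)"
      using xy i01 i03 i02 i12 i13 i23 by (elim disjE) blast+
    then show ?thesis using JT i03 i12 by auto
  next
    case False
    have "finite J" using JT finite_subset by blast
    then show ?thesis using False card_le_Suc0_iff_eq[of J] by auto
  qed
qed

text \<open>Replacing every value by its complement K - v preserves separation, blocks and
  simplicity; this lets us assume v 1 < v 0 below.\<close>
lemma separates_complement: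
  assumes "v a \<le> K" "v q \<le> K" "v b \<le> K"
  shows "separates (\<lambda>i. K - v i) a q b = separates v a q b"
  using assms unfolding separates_def by auto

lemma simple_on_complement:
  assumes bound: "\<forall>i\<in>X. v i \<le> K"
  shows "simple_on (\<lambda>i. K - v i) X = simple_on v X"
proof -
  have sep: "separates (\<lambda>i. K - v i) a q b = separates v a q b" if "a \<in> X" "q \<in> X" "b \<in> X"
    for a q b using separates_complement[of v a K q b] bound that by blast
  have "is_block (\<lambda>i. K - v i) X J = is_block v X J" for J
    unfolding is_block_def
  proof (rule conj_cong[OF refl])
    assume "J \<subseteq> X"
    then show "(\<forall>q\<in>X - J. \<forall>a\<in>J. \<forall>b\<in>J. \<not> separates (\<lambda>i. K - v i) a q b)
      = (\<forall>q\<in>X - J. \<forall>a\<in>J. \<forall>b\<in>J. \<not> separates v a q b)"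
      using sep by (intro ball_cong refl) (simp add: subset_iff)
  qed
  then show ?thesis unfolding simple_on_def by simp
qed

text \<open>In a simple permutation of length at least 3 the first entry is not the largest;
  otherwise all other positions would form a block.\<close>
lemma first_not_max:
  assumes n: "3 \<le> n" and inj: "inj_on v {0..<n}" and simple: "simple_on v {0..<n}"
  shows "\<exists>i<n. v 0 < v i"
proof (rule ccontr)
  assume "\<not> (\<exists>i<n. v 0 < v i)"
  then have lt: "v i < v 0" if "i \<in> {0..<n} - {0}" for i
    using that inj_onD[OF inj, of i 0] n by fastforce
  have "is_block v {0..<n} ({0..<n} - {0})"
    unfolding is_block_def
  proof (intro conjI ballI)
    fix q a b assume "q \<in> {0..<n} - ({0..<n} - {0})" "a \<in> {0..<n} - {0}" "b \<in> {0..<n} - {0}"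
    then show "\<not> separates v a q b" using lt[of a] lt[of b] unfolding separates_def by auto
  qed auto
  moreover have "card ({0..<n} - {0}) = n - 1" using n by simp
  ultimately show False using simple n unfolding simple_on_def by fastforce
qed

lemma prefix_block:
  assumes "b \<le> n" and below: "\<forall>i<b. v i \<le> v 0"
    and gap: "\<forall>a q. a < b \<longrightarrow> b \<le> q \<longrightarrow> q < n \<longrightarrow> \<not> (v a < v q \<and> v q < v 0)"
  shows "is_block v {0..<n} {0..<b}"
  unfolding is_block_def
proof (intro conjI ballI)
  fix q a c assume q: "q \<in> {0..<n} - {0..<b}" and a: "a \<in> {0..<b}" and c: "c \<in> {0..<b}"
  have "v a \<le> v 0" "v c \<le> v 0" using below a c by auto
  moreover have "\<not> (v a < v q \<and> v q < v 0)" "\<not> (v c < v q \<and> v q < v 0)"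
    using gap q a c by auto
  ultimately show "\<not> separates v a q c" using q a c unfolding separates_def by auto
qed (use assms in auto)

text \<open>Base case of the extension argument: a simple permutation with v 1 < v 0 and length
  at least 4 contains the simple pattern 3142.  Let b be the first position above v 0; an
  earlier entry and a later entry in value between it and v 0 give 3142, and otherwise
  the positions before b form a nontrivial block.\<close>
lemma simple_4_subset_descent:
  assumes n: "4 \<le> n" and inj: "inj_on v {0..<n}" and simple: "simple_on v {0..<n}"
    and v10: "v 1 < v 0"
  shows "\<exists>T \<subseteq> {0..<n}. card T = 4 \<and> simple_on v T"
proof -
  define b where "b = (LEAST i. i < n \<and> v 0 < v i)"
  have "3 \<le> n" using n by simp
  then have "\<exists>i. i < n \<and> v 0 < v i" using first_not_max[OF _ inj simple] by blast
  then have b: "b < n \<and> v 0 < v b" unfolding b_def by (rule LeastI_ex)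
  then have b: "b < n" "v 0 < v b" by auto
  have b_least: "b \<le> i" if "i < n" "v 0 < v i" for i
    unfolding b_def by (rule Least_le) (use that in blast)
  have "b \<noteq> 0" "b \<noteq> 1" using b(2) v10 by (metis less_irrefl, metis less_asym)
  then have b2: "2 \<le> b" by auto
  have below: "\<forall>i<b. v i \<le> v 0"
  proof (intro allI impI)
    fix i assume "i < b"
    then show "v i \<le> v 0" using b_least[of i] b(1) by fastforce
  qed
  show ?thesis
  proof (cases "\<exists>a c. a < b \<and> b \<le> c \<and> c < n \<and> v a < v c \<and> v c < v 0")
    case True
    then obtain a c where ac: "a < b" "b \<le> c" "c < n" "v a < v c" "v c < v 0" by blast
    have "a \<noteq> 0" "c \<noteq> b" using ac(4,5) b(2) by (metis less_asym)+
    then have pos: "0 < a" "b < c" using ac(2) by simp_all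
    have "simple_on v {0, a, b, c}" using four_point_simple[OF pos(1) ac(1) pos(2) ac(4,5) b(2)] .
    moreover have "card {0, a, b, c} = 4" "{0, a, b, c} \<subseteq> {0..<n}" using pos ac(1,3) by auto
    ultimately show ?thesis by blast
  next
    case False
    have "b \<le> n" using b(1) by simp
    then have "is_block v {0..<n} {0..<b}" using prefix_block below False by blast
    then show ?thesis using simple b b2 unfolding simple_on_def by fastforce
  qed
qed

text \<open>Every simple permutation of length at least 4 contains a simple subset of size 4
  (by complementing values, the case v 0 < v 1 reduces to the previous lemma).\<close>
lemma simple_4_subset:
  assumes n: "4 \<le> n" and inj: "inj_on v {0..<n}" and simple: "simple_on v {0..<n}"
  shows "\<exists>T \<subseteq> {0..<n}. card T = 4 \<and> simple_on v T"
proof (cases "v 1 < v 0")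
  case True
  then show ?thesis using simple_4_subset_descent assms by blast
next
  case False
  define K where "K = Max (v ` {0..<n})"
  have bnd: "\<forall>i\<in>{0..<n}. v i \<le> K" unfolding K_def by auto
  define w where "w = (\<lambda>i. K - v i)"
  have "inj_on w {0..<n}"
  proof (rule inj_onI)
    fix x y assume xy: "x \<in> {0..<n}" "y \<in> {0..<n}" "w x = w y"
    then have "v x = v y" using bnd unfolding w_def by (metis diff_diff_cancel)
    then show "x = y" using inj xy unfolding inj_on_def by blast
  qed
  moreover have "simple_on w {0..<n}" using simple simple_on_complement[OF bnd] w_def by simp
  moreover have "w 1 < w 0"
  proof -
    have "v 1 \<noteq> v 0"
    proof
      assume "v 1 = v 0"
      from inj_onD[OF inj this] n show False by simp
    qed
    then have "v 0 < v 1" using False by simp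
    moreover have "v 1 \<le> K" using bnd n by simp
    ultimately show ?thesis unfolding w_def by (simp add: diff_less_mono2)
  qed
  ultimately obtain T where T: "T \<subseteq> {0..<n}" "card T = 4" "simple_on w T"
    using simple_4_subset_descent n by blast
  have "\<forall>i\<in>T. v i \<le> K" using bnd T by auto
  then have "simple_on v T" using T(3) simple_on_complement[of T v K] unfolding w_def by simp
  then show ?thesis using T by blast
qed

text \<open>Take a maximal proper simple
  subset of size at least 3 and extend it by at most two points.\<close>
theorem simple_length_bound:
  assumes inj: "inj_on v {0..<n}" and simple: "simple_on v {0..<n}"
    and small: "\<forall>T. T \<subseteq> {0..<n} \<and> T \<noteq> {0..<n} \<and> simple_on v T \<longrightarrow> card T \<le> m"
  shows "n \<le> max 4 (m + 2)"
proof (rule ccontr)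
  assume "\<not> n \<le> max 4 (m + 2)"
  then have n: "5 \<le> n" "m + 2 < n" by auto
  let ?P = "{0..<n}"
  define S where "S = (\<lambda>T. T \<subseteq> ?P \<and> T \<noteq> ?P \<and> simple_on v T \<and> 3 \<le> card T)"
  have "4 \<le> n" using n by simp
  then obtain T0 where "T0 \<subseteq> ?P" "card T0 = 4" "simple_on v T0"
    using simple_4_subset[OF _ inj simple] by blast
  then have "S T0" using n unfolding S_def by auto
  moreover have "card T < Suc n" if "S T" for T
    using that card_mono[of ?P T] unfolding S_def by auto
  ultimately obtain T where T: "S T" and T_max: "\<forall>T'. S T' \<longrightarrow> card T' \<le> card T"
    using ex_has_greatest_nat[of S T0 card "Suc n"] by blast
  then have TT: "T \<subseteq> ?P" "T \<noteq> ?P" "simple_on v T" "3 \<le> card T" unfolding S_def by auto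
  interpret extension_problem v ?P T
    by unfold_locales (use inj simple TT in auto)
  obtain Y where Y: "T \<subset> Y" "Y \<subseteq> ?P" "card Y \<le> card T + 2" "simple_on v Y"
    using simple_extension by blast
  have "card T < card Y"
    using Y(1,2) by (meson finite_atLeastLessThan finite_subset psubset_card_mono)
  show False
  proof (cases "Y = ?P")
    case True
    have "card T \<le> m" using small TT by blast
    then show False using Y(3) True n by simp
  next
    case False
    then have "S Y" using Y TT \<open>card T < card Y\<close> unfolding S_def by auto
    then have "card Y \<le> card T" using T_max by blast
    then show False using \<open>card T < card Y\<close> by simp
  qed
qed
definition order_emb :: "nat list \<Rightarrow> nat set \<Rightarrow> nat list \<Rightarrow> nat set \<Rightarrow> (nat \<Rightarrow> nat) \<Rightarrow> bool" where
  "order_emb p A q B h \<longleftrightarrow> (\<forall>i\<in>A. h i \<in> B) \<and> (\<forall>i\<in>A. \<forall>j\<in>A. i < j \<longrightarrow> h i < h j)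
     \<and> (\<forall>i\<in>A. \<forall>j\<in>A. p!i < p!j \<longleftrightarrow> q!(h i) < q!(h j))"

definition nth_of :: "nat set \<Rightarrow> nat \<Rightarrow> nat" where
  "nth_of K i = sorted_list_of_set K ! i"

definition index_of :: "nat set \<Rightarrow> nat \<Rightarrow> nat" where
  "index_of K i = card {j\<in>K. j < i}"

lemma nth_of_mono: "finite K \<Longrightarrow> i < j \<Longrightarrow> j < card K \<Longrightarrow> nth_of K i < nth_of K j"
  unfolding nth_of_def using sorted_wrt_nth_less[OF strict_sorted_list_of_set, of i j K]
  by (simp add: length_sorted_list_of_set)

lemma nth_of_in: "finite K \<Longrightarrow> i < card K \<Longrightarrow> nth_of K i \<in> K"
  unfolding nth_of_def by (metis length_sorted_list_of_set nth_mem set_sorted_list_of_set)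

lemma nth_of_surj: "finite K \<Longrightarrow> x \<in> K \<Longrightarrow> \<exists>i < card K. nth_of K i = x"
  unfolding nth_of_def by (metis in_set_conv_nth length_sorted_list_of_set set_sorted_list_of_set)

lemma nth_of_image: "finite K \<Longrightarrow> nth_of K ` {0..<card K} = K"
  using nth_of_in nth_of_surj by fastforce

lemma nth_of_less_iff: "finite K \<Longrightarrow> i < card K \<Longrightarrow> j < card K \<Longrightarrow> nth_of K i < nth_of K j \<longleftrightarrow> i < j"
  using nth_of_mono by (metis less_asym linorder_neqE_nat)

lemma index_of_nth_of: "finite K \<Longrightarrow> i < card K \<Longrightarrow> index_of K (nth_of K i) = i"
proof -
  assume fin: "finite K" and i: "i < card K"
  have "{j\<in>K. j < nth_of K i} = nth_of K ` {0..<i}"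
  proof
    show "{j \<in> K. j < nth_of K i} \<subseteq> nth_of K ` {0..<i}"
    proof
      fix j assume j: "j \<in> {j \<in> K. j < nth_of K i}"
      then obtain k where k: "k < card K" "nth_of K k = j" using nth_of_surj fin by blast
      then have "k < i" using nth_of_less_iff[OF fin k(1) i] j by auto
      then show "j \<in> nth_of K ` {0..<i}" using k by auto
    qed
    show "nth_of K ` {0..<i} \<subseteq> {j \<in> K. j < nth_of K i}"
      using nth_of_in nth_of_mono fin i by auto
  qed
  moreover have "inj_on (nth_of K) {0..<i}"
  proof (rule inj_onI)
    fix x y assume xy: "x \<in> {0..<i}" "y \<in> {0..<i}" "nth_of K x = nth_of K y"
    then have "x < card K" "y < card K" using i by auto
    then show "x = y" using xy(3) nth_of_less_iff[OF fin, of x y] nth_of_less_iff[OF fin, of y x]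
      by (cases x y rule: linorder_cases) auto
  qed
  ultimately show ?thesis unfolding index_of_def by (simp add: card_image)
qed

lemma nth_of_index_of: "finite K \<Longrightarrow> x \<in> K \<Longrightarrow> nth_of K (index_of K x) = x"
  using nth_of_surj index_of_nth_of by metis

lemma index_of_less: "finite K \<Longrightarrow> x \<in> K \<Longrightarrow> index_of K x < card K"
  using nth_of_surj index_of_nth_of by metis

lemma index_of_less_iff:
  "finite K \<Longrightarrow> x \<in> K \<Longrightarrow> y \<in> K \<Longrightarrow> index_of K x < index_of K y \<longleftrightarrow> x < y"
  by (metis nth_of_index_of nth_of_less_iff index_of_less)

lemma index_of_mono: "finite K \<Longrightarrow> x \<le> y \<Longrightarrow> index_of K x \<le> index_of K y"
  unfolding index_of_def by (intro card_mono) auto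

lemma nths_as_map: "K \<subseteq> {0..<length xs} \<Longrightarrow> nths xs K = map ((!) xs) (sorted_list_of_set K)"
proof -
  assume K: "K \<subseteq> {0..<length xs}"
  have z: "zip xs [0..<length xs] = map (\<lambda>i. (xs!i, i)) [0..<length xs]"
    by (rule nth_equalityI) auto
  have "nths xs K = map ((!) xs) (filter (\<lambda>i. i \<in> K) [0..<length xs])"
    unfolding nths_def z by (simp add: filter_map comp_def)
  moreover have "filter (\<lambda>i. i \<in> K) [0..<length xs] = sorted_list_of_set K"
  proof -
    have fin: "finite K" using K finite_subset by blast
    have "sorted_wrt (<) (filter (\<lambda>i. i \<in> K) [0..<length xs])"
      by (rule sorted_wrt_filter) (simp add: sorted_wrt_upt)
    moreover have "set (filter (\<lambda>i. i \<in> K) [0..<length xs]) = K" using K by auto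
    moreover have "length (filter (\<lambda>i. i \<in> K) [0..<length xs]) = card K"
      by (metis calculation(2) distinct_card distinct_filter distinct_upt)
    ultimately have "sorted_list_of_set K = filter (\<lambda>i. i \<in> K) [0..<length xs]"
      by (intro iffD1[OF sorted_list_of_set_unique[OF fin]] conjI)
    then show ?thesis by simp
  qed
  ultimately show ?thesis by simp
qed

lemma nth_nths: "K \<subseteq> {0..<length xs} \<Longrightarrow> i < card K \<Longrightarrow> nths xs K ! i = xs ! nth_of K i"
  by (simp add: nths_as_map nth_of_def length_sorted_list_of_set)

lemma length_nths_subset: "K \<subseteq> {0..<length xs} \<Longrightarrow> length (nths xs K) = card K"
  by (simp add: nths_as_map length_sorted_list_of_set)

lemma sorted_list_of_strict_image:
  assumes mono: "\<And>i j. i < j \<Longrightarrow> j < k \<Longrightarrow> h i < h j"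
  shows "sorted_list_of_set (h ` {0..<k}) = map h [0..<k]"
proof -
  have "sorted_wrt (<) (map h [0..<k])"
    unfolding sorted_wrt_map using mono
    by (auto intro!: sorted_wrt_mono_rel[OF _ sorted_wrt_upt[of 0 k]])
  moreover have "set (map h [0..<k]) = h ` {0..<k}" by auto
  moreover have "length (map h [0..<k]) = card (h ` {0..<k})"
    by (metis calculation distinct_card length_map strict_sorted_iff)
  ultimately show ?thesis by (intro iffD1[OF sorted_list_of_set_unique] conjI) auto
qed

lemma contains_iff_emb: "\<sigma> \<preceq> \<pi> \<longleftrightarrow> (\<exists>h. order_emb \<sigma> {0..<length \<sigma>} \<pi> {0..<length \<pi>} h)"
proof
  assume "\<sigma> \<preceq> \<pi>"
  then obtain I where I: "I \<subseteq> {0..<length \<pi>}" "order_iso \<sigma> (nths \<pi> I)"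
    unfolding contains_def by blast
  have fin: "finite I" using I finite_subset by blast
  have len: "length \<sigma> = card I" using I length_nths_subset unfolding order_iso_def by metis
  have "order_emb \<sigma> {0..<length \<sigma>} \<pi> {0..<length \<pi>} (nth_of I)"
    unfolding order_emb_def using I nth_of_in[OF fin] nth_of_mono[OF fin] nth_nths[OF I(1)] len
    unfolding order_iso_def by (auto simp: subset_iff)
  then show "\<exists>h. order_emb \<sigma> {0..<length \<sigma>} \<pi> {0..<length \<pi>} h" by blast
next
  assume "\<exists>h. order_emb \<sigma> {0..<length \<sigma>} \<pi> {0..<length \<pi>} h"
  then obtain h where h: "order_emb \<sigma> {0..<length \<sigma>} \<pi> {0..<length \<pi>} h" by blast
  define I where "I = h ` {0..<length \<sigma>}"
  have I: "I \<subseteq> {0..<length \<pi>}" using h unfolding order_emb_def I_def by auto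
  have "sorted_list_of_set I = map h [0..<length \<sigma>]"
    unfolding I_def using h unfolding order_emb_def by (intro sorted_list_of_strict_image) auto
  then have "nths \<pi> I = map (\<lambda>i. \<pi> ! h i) [0..<length \<sigma>]" using nths_as_map[OF I] by simp
  then have "order_iso \<sigma> (nths \<pi> I)" unfolding order_iso_def using h unfolding order_emb_def by auto
  then show "\<sigma> \<preceq> \<pi>" using I unfolding contains_def by blast
qed

lemma order_emb_comp: "order_emb p A q B h \<Longrightarrow> order_emb q B r C g \<Longrightarrow> order_emb p A r C (g \<circ> h)"
  unfolding order_emb_def by auto

lemma order_emb_mono: "order_emb p A q B h \<Longrightarrow> A' \<subseteq> A \<Longrightarrow> B \<subseteq> B' \<Longrightarrow> order_emb p A' q B' h"
  unfolding order_emb_def by blast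

lemma contains_trans: "a \<preceq> b \<Longrightarrow> b \<preceq> c \<Longrightarrow> a \<preceq> c"
  unfolding contains_iff_emb using order_emb_comp by blast

lemma order_emb_from_nths: "K \<subseteq> {0..<length p} \<Longrightarrow> order_emb (nths p K) {0..<card K} p K (nth_of K)"
proof -
  assume K: "K \<subseteq> {0..<length p}"
  have fin: "finite K" using K finite_subset by blast
  show ?thesis unfolding order_emb_def using nth_of_in[OF fin] nth_of_mono[OF fin] nth_nths[OF K]
    by auto
qed

lemma order_emb_to_nths: "K \<subseteq> {0..<length p} \<Longrightarrow> order_emb p K (nths p K) {0..<card K} (index_of K)"
proof -
  assume K: "K \<subseteq> {0..<length p}"
  have fin: "finite K" using K finite_subset by blast
  show ?thesis unfolding order_emb_def
  proof (intro conjI ballI impI)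
    fix i assume "i \<in> K" then show "index_of K i \<in> {0..<card K}" using index_of_less fin by auto
  next
    fix i j assume "i \<in> K" "j \<in> K" "i < j" then show "index_of K i < index_of K j"
      using index_of_less_iff fin by auto
  next
    fix i j assume ij: "i \<in> K" "j \<in> K"
    then show "p ! i < p ! j \<longleftrightarrow> nths p K ! index_of K i < nths p K ! index_of K j"
      using nth_nths[OF K] index_of_less[OF fin] nth_of_index_of[OF fin] by simp
  qed
qed

lemma nths_contained: "K \<subseteq> {0..<length p} \<Longrightarrow> nths p K \<preceq> p"
  unfolding contains_def using order_iso_def by blast

lemma nths_contains_iff:
  assumes A: "A \<subseteq> {0..<length p}" and B: "B \<subseteq> {0..<length q}"
  shows "nths p A \<preceq> nths q B \<longleftrightarrow> (\<exists>h. order_emb p A q B h)"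
proof
  assume "nths p A \<preceq> nths q B"
  then obtain g where g: "order_emb (nths p A) {0..<card A} (nths q B) {0..<card B} g"
    unfolding contains_iff_emb using length_nths_subset A B by metis
  have "order_emb p A q B (nth_of B \<circ> (g \<circ> index_of A))"
    using order_emb_comp[OF order_emb_to_nths[OF A] order_emb_comp[OF g order_emb_from_nths[OF B]]]
      by (simp add: comp_assoc)
  then show "\<exists>h. order_emb p A q B h" by blast
next
  assume "\<exists>h. order_emb p A q B h"
  then obtain h where h: "order_emb p A q B h" by blast
  have "order_emb (nths p A) {0..<card A} (nths q B) {0..<card B} (index_of B \<circ> (h \<circ> nth_of A))"
    using order_emb_comp[OF order_emb_from_nths[OF A] order_emb_comp[OF h order_emb_to_nths[OF B]]]
      by (simp add: comp_assoc)
  then show "nths p A \<preceq> nths q B" unfolding contains_iff_emb using length_nths_subset A B by metis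
qed

lemma order_emb_less_iff: "order_emb p A q B h \<Longrightarrow> i \<in> A \<Longrightarrow> j \<in> A \<Longrightarrow> h i < h j \<longleftrightarrow> i < j"
  unfolding order_emb_def by (metis less_asym linorder_neqE_nat)

lemma order_emb_inj: "order_emb p A q B h \<Longrightarrow> inj_on h A"
proof (rule inj_onI)
  fix x y assume h: "order_emb p A q B h" and xy: "x \<in> A" "y \<in> A" "h x = h y"
  show "x = y" using order_emb_less_iff[OF h xy(1,2)] order_emb_less_iff[OF h xy(2,1)] xy(3)
    by (cases x y rule: linorder_cases) auto
qed

lemma separates_emb:
  assumes h: "order_emb p A q B h" and "a \<in> A" "x \<in> A" "b \<in> A"
  shows "separates ((!) p) a x b \<longleftrightarrow> separates ((!) q) (h a) (h x) (h b)"
proof -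
  have v: "\<And>i j. i \<in> A \<Longrightarrow> j \<in> A \<Longrightarrow> p!i < p!j \<longleftrightarrow> q!(h i) < q!(h j)"
    using h unfolding order_emb_def by blast
  have e1: "(h a < h x) = (a < x)" "(h x < h b) = (x < b)"
    "(h b < h x) = (b < x)" "(h x < h a) = (x < a)"
    using order_emb_less_iff[OF h] assms(2-4) by blast+
  have v1: "(p!a < p!x) = (q!(h a) < q!(h x))" "(p!x < p!b) = (q!(h x) < q!(h b))"
     "(p!b < p!x) = (q!(h b) < q!(h x))" "(p!x < p!a) = (q!(h x) < q!(h a))"
    using v assms(2-4) by blast+
  show ?thesis by (simp only: separates_def e1 v1)
qed

lemma block_emb:
  assumes h: "order_emb p A q B h" and JT: "J \<subseteq> T" and TA: "T \<subseteq> A"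
  shows "is_block ((!) p) T J \<longleftrightarrow> is_block ((!) q) (h ` T) (h ` J)"
proof -
  have inj: "inj_on h A" using order_emb_inj[OF h] .
  have bt: "\<And>a x b. a \<in> T \<Longrightarrow> x \<in> T \<Longrightarrow> b \<in> T \<Longrightarrow>
      separates ((!) p) a x b \<longleftrightarrow> separates ((!) q) (h a) (h x) (h b)"
    using separates_emb[OF h] TA by blast
  have diff: "h ` T - h ` J = h ` (T - J)" 
  proof -
    have "T - J \<subseteq> A" "J \<subseteq> A" using JT TA by auto
    then show ?thesis using inj_on_image_set_diff[OF inj] by blast
  qed
  show ?thesis
  proof
    assume iv: "is_block ((!) p) T J"
    show "is_block ((!) q) (h ` T) (h ` J)"
      unfolding is_block_def
    proof (intro conjI ballI)
      fix q' a' b' assume q': "q' \<in> h ` T - h ` J" and a': "a' \<in> h ` J" and b': "b' \<in> h ` J"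
      obtain x where x: "x \<in> T - J" "q' = h x" using q' diff by auto
      obtain a where a: "a \<in> J" "a' = h a" using a' by auto
      obtain b where b: "b \<in> J" "b' = h b" using b' by auto
      have "\<not> separates ((!) p) a x b" using iv x a b unfolding is_block_def by blast
      then show "\<not> separates ((!) q) a' q' b'" using bt[of a x b] x a b JT by auto
    qed (use JT in auto)
  next
    assume iv: "is_block ((!) q) (h ` T) (h ` J)"
    show "is_block ((!) p) T J"
      unfolding is_block_def
    proof (intro conjI ballI)
      fix x a b assume x: "x \<in> T - J" and a: "a \<in> J" and b: "b \<in> J"
      have "h x \<in> h ` T - h ` J" using diff x by auto
      then have "\<not> separates ((!) q) (h a) (h x) (h b)" using iv a b unfolding is_block_def by blast
      then show "\<not> separates ((!) p) a x b" using bt[of a x b] x a b JT by auto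
    qed (use JT in auto)
  qed
qed

lemma simple_on_emb:
  assumes h: "order_emb p A q B h" and TA: "T \<subseteq> A"
  shows "simple_on ((!) p) T \<longleftrightarrow> simple_on ((!) q) (h ` T)"
proof -
  have inj: "inj_on h T" using order_emb_inj[OF h] TA inj_on_subset by blast
  show ?thesis
  proof
    assume s: "simple_on ((!) p) T"
    show "simple_on ((!) q) (h ` T)"
      unfolding simple_on_def
    proof (intro allI impI)
      fix J' assume J': "is_block ((!) q) (h ` T) J'"
      define J where "J = {x\<in>T. h x \<in> J'}"
      have JT: "J \<subseteq> T" unfolding J_def by auto
      have hJ: "h ` J = J'" using J' unfolding J_def is_block_def by auto
      have "is_block ((!) p) T J" using block_emb[OF h JT TA] J' hJ by simp
      then have "card J \<le> 1 \<or> J = T" using s unfolding simple_on_def by blast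
      moreover have "card J' = card J" using hJ inj JT by (metis card_image inj_on_subset)
      ultimately show "card J' \<le> 1 \<or> J' = h ` T" using hJ by auto
    qed
  next
    assume s: "simple_on ((!) q) (h ` T)"
    show "simple_on ((!) p) T"
      unfolding simple_on_def
    proof (intro allI impI)
      fix J assume J: "is_block ((!) p) T J"
      then have JT: "J \<subseteq> T" unfolding is_block_def by auto
      have "is_block ((!) q) (h ` T) (h ` J)" using block_emb[OF h JT TA] J by simp
      then have "card (h ` J) \<le> 1 \<or> h ` J = h ` T" using s unfolding simple_on_def by blast
      moreover have "card (h ` J) = card J" using inj JT by (metis card_image inj_on_subset)
      moreover have "h ` J = h ` T \<Longrightarrow> J = T" using inj JT by (metis inj_on_image_eq_iff order_refl)
      ultimately show "card J \<le> 1 \<or> J = T" by auto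
    qed
  qed
qed

text \<open>The rank of the entry at position k among the entries at positions K; it standardises
  the pattern of p on K to a permutation of {0..<card K}.\<close>
definition value_rank :: "nat list \<Rightarrow> nat set \<Rightarrow> nat \<Rightarrow> nat" where
  "value_rank p K k = card {j\<in>K. p!j < p!k}"

lemma value_rank_less_iff:
  assumes K: "K \<subseteq> {0..<length p}" and d: "distinct p" and a: "a \<in> K" and b: "b \<in> K"
  shows "value_rank p K a < value_rank p K b \<longleftrightarrow> p!a < p!b"
proof -
  have fin: "finite K" using K finite_subset by blast
  have one: "value_rank p K x < value_rank p K y" if "x \<in> K" "y \<in> K" "p!x < p!y" for x y
  proof -
    have "{j\<in>K. p!j < p!x} \<subset> {j\<in>K. p!j < p!y}" using that by auto
    then show ?thesis unfolding value_rank_def using fin by (intro psubset_card_mono) auto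
  qed
  show ?thesis
  proof
    assume h: "value_rank p K a < value_rank p K b"
    show "p!a < p!b"
    proof (rule ccontr)
      assume "\<not> p!a < p!b"
      then have "p!b < p!a \<or> p!a = p!b" by auto
      then show False
      proof
        assume "p!b < p!a" then show False using one[OF b a] h by auto
      next
        assume "p!a = p!b"
        moreover have "a < length p" "b < length p" using a b K by auto
        ultimately have "a = b" using nth_eq_iff_index_eq[OF d] by blast
        then show False using h by simp
      qed
    qed
  qed (use one a b in auto)
qed

lemma value_rank_less:
  assumes K: "K \<subseteq> {0..<length p}" and a: "a \<in> K"
  shows "value_rank p K a < card K"
proof -
  have fin: "finite K" using K finite_subset by blast
  have "{j\<in>K. p!j < p!a} \<subset> K" using a by auto
  then show ?thesis unfolding value_rank_def using fin psubset_card_mono by blast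
qed

lemma standard_pattern:
  assumes K: "K \<subseteq> {0..<length p}" and d: "distinct p"
  shows "\<exists>\<rho>. is_perm \<rho> \<and> length \<rho> = card K \<and> order_emb \<rho> {0..<card K} p K (nth_of K)"
proof -
  have fin: "finite K" using K finite_subset by blast
  define \<rho> where "\<rho> = map (value_rank p K) (sorted_list_of_set K)"
  have len: "length \<rho> = card K" unfolding \<rho>_def by (simp add: length_sorted_list_of_set)
  have nth: "\<rho> ! i = value_rank p K (nth_of K i)" if "i < card K" for i
    unfolding \<rho>_def nth_of_def using that by (simp add: length_sorted_list_of_set)
  have injr: "inj_on (value_rank p K) K"
  proof (rule inj_onI)
    fix x y assume xy: "x \<in> K" "y \<in> K" "value_rank p K x = value_rank p K y"
    then have "\<not> p!x < p!y" "\<not> p!y < p!x"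
      using value_rank_less_iff[OF K d xy(1,2)] value_rank_less_iff[OF K d xy(2,1)] by auto
    then have "p!x = p!y" by auto
    moreover have "x < length p" "y < length p" using xy K by auto
    ultimately show "x = y" using nth_eq_iff_index_eq[OF d] by blast
  qed
  have dist: "distinct \<rho>" unfolding \<rho>_def using injr fin
    by (simp add: distinct_map)
  have "set \<rho> = value_rank p K ` K" unfolding \<rho>_def using fin by simp
  moreover have "value_rank p K ` K \<subseteq> {0..<card K}" using value_rank_less[OF K] by auto
  moreover have "card (value_rank p K ` K) = card K" using injr card_image by blast
  ultimately have "set \<rho> = {0..<card K}"
    by (metis card_atLeastLessThan card_subset_eq finite_atLeastLessThan minus_nat.diff_0)
  then have perm: "is_perm \<rho>" unfolding is_perm_def using dist len by simp
  have "order_emb \<rho> {0..<card K} p K (nth_of K)"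
    unfolding order_emb_def
  proof (intro conjI ballI impI)
    fix i assume "i \<in> {0..<card K}" then show "nth_of K i \<in> K" using nth_of_in fin by auto
  next
    fix i j assume "i \<in> {0..<card K}" "j \<in> {0..<card K}" "i < j" then show "nth_of K i < nth_of K j"
      using nth_of_mono fin by auto
  next
    fix i j assume ij: "i \<in> {0..<card K}" "j \<in> {0..<card K}"
    then have "nth_of K i \<in> K" "nth_of K j \<in> K" using nth_of_in fin by auto
    then show "\<rho> ! i < \<rho> ! j \<longleftrightarrow> p ! nth_of K i < p ! nth_of K j"
      using nth ij value_rank_less_iff[OF K d] by auto
  qed
  then show ?thesis using perm len by blast
qed

text \<open>A permutation whose full point set is simple is simple in the sense of intervals,
  since intervals are blocks.\<close>
lemma simple_on_imp_simple:
  assumes perm: "is_perm \<sigma>" and s: "simple_on ((!) \<sigma>) {0..<length \<sigma>}"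
  shows "simple \<sigma>"
  unfolding simple_def
proof (intro conjI allI impI)
  show "is_perm \<sigma>" by fact
  fix S assume "is_interval \<sigma> S"
  then obtain i j a b where S: "S = {i..<j}" "j \<le> length \<sigma>" "(\<lambda>k. \<sigma> ! k) ` S = {a..<b}"
    unfolding is_interval_def by blast
  have d: "distinct \<sigma>" using perm unfolding is_perm_def by auto
  have "is_block ((!) \<sigma>) {0..<length \<sigma>} S"
    unfolding is_block_def
  proof (intro conjI ballI)
    show "S \<subseteq> {0..<length \<sigma>}" using S by auto
    fix q x y assume q: "q \<in> {0..<length \<sigma>} - S" and x: "x \<in> S" and y: "y \<in> S"
    have pos: "\<not> (x < q \<and> q < y) \<and> \<not> (y < q \<and> q < x)" using q x y S by auto
    have "\<sigma> ! q \<notin> {a..<b}"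
    proof
      assume "\<sigma> ! q \<in> {a..<b}"
      then obtain k where k: "k \<in> S" "\<sigma> ! q = \<sigma> ! k" using S(3) by (metis imageE)
      moreover have "q < length \<sigma>" "k < length \<sigma>" using q k S by auto
      ultimately have "q = k" using nth_eq_iff_index_eq[OF d] by blast
      then show False using k q by auto
    qed
    moreover have "\<sigma> ! x \<in> {a..<b}" "\<sigma> ! y \<in> {a..<b}" using S(3) x y by auto
    ultimately have "\<not> (\<sigma>!x < \<sigma>!q \<and> \<sigma>!q < \<sigma>!y) \<and> \<not> (\<sigma>!y < \<sigma>!q \<and> \<sigma>!q < \<sigma>!x)" by auto
    then show "\<not> separates ((!) \<sigma>) x q y" using pos unfolding separates_def by auto
  qed
  then have "card S \<le> 1 \<or> S = {0..<length \<sigma>}" using s unfolding simple_on_def by blast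
  then show "card S \<in> {0, 1, length \<sigma>}" by auto
qed
text \<open>The list \<pi> is an inflation of the skeleton \<sigma> with
  segment map f if f sends the positions of \<pi> monotonically onto the positions of \<sigma>,
  and entries in different segments compare like the corresponding entries of \<sigma>.\<close>
definition inflation :: "nat list \<Rightarrow> nat list \<Rightarrow> (nat \<Rightarrow> nat) \<Rightarrow> bool" where
  "inflation \<sigma> \<pi> f \<longleftrightarrow> (\<forall>i<length \<pi>. f i < length \<sigma>) \<and> (\<forall>c<length \<sigma>. \<exists>i<length \<pi>. f i = c)
    \<and> (\<forall>i j. i \<le> j \<longrightarrow> j < length \<pi> \<longrightarrow> f i \<le> f j)
    \<and> (\<forall>i<length \<pi>. \<forall>j<length \<pi>. f i \<noteq> f j \<longrightarrow> (\<pi>!i < \<pi>!j \<longleftrightarrow> \<sigma>!(f i) < \<sigma>!(f j)))"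

definition segment :: "nat list \<Rightarrow> (nat \<Rightarrow> nat) \<Rightarrow> nat \<Rightarrow> nat set" where
  "segment \<pi> f c = {i. i < length \<pi> \<and> f i = c}"

lemma inflationD:
  assumes "inflation \<sigma> \<pi> f"
  shows "\<And>i. i < length \<pi> \<Longrightarrow> f i < length \<sigma>"
    and "\<And>c. c < length \<sigma> \<Longrightarrow> \<exists>i<length \<pi>. f i = c"
    and "\<And>i j. i \<le> j \<Longrightarrow> j < length \<pi> \<Longrightarrow> f i \<le> f j"
    and "\<And>i j. i < length \<pi> \<Longrightarrow> j < length \<pi> \<Longrightarrow> f i \<noteq> f j \<Longrightarrow> (\<pi>!i < \<pi>!j \<longleftrightarrow> \<sigma>!(f i) < \<sigma>!(f j))"
  using assms unfolding inflation_def by auto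

lemma inflation_trivial:
  assumes d: "distinct \<pi>"
  shows "\<exists>\<rho>. is_perm \<rho> \<and> length \<rho> = length \<pi> \<and> inflation \<rho> \<pi> id"
proof -
  let ?n = "length \<pi>"
  obtain \<rho> where r: "is_perm \<rho>" "length \<rho> = card {0..<?n}"
      "order_emb \<rho> {0..<card {0..<?n}} \<pi> {0..<?n} (nth_of {0..<?n})"
    using standard_pattern[of "{0..<?n}" \<pi>] d by auto
  have en: "nth_of {0..<?n} i = i" if "i < ?n" for i unfolding nth_of_def using that by simp
  have "inflation \<rho> \<pi> id"
    unfolding inflation_def
  proof (intro conjI allI impI)
    fix i j assume "i < ?n" "j < ?n"
    then show "\<pi>!i < \<pi>!j \<longleftrightarrow> \<rho>!(id i) < \<rho>!(id j)" using r(3) en unfolding order_emb_def by auto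
  qed (use r in auto)
  then show ?thesis using r by auto
qed

lemma block_contiguous:
  assumes J: "is_block v {0..<n} J" and ne: "J \<noteq> {}"
  shows "J = {Min J..Max J}"
proof -
  have fin: "finite J" using J unfolding is_block_def using finite_subset by blast
  have "c \<in> J" if "Min J \<le> c" "c \<le> Max J" for c
  proof (rule ccontr)
    assume c: "c \<notin> J"
    have mm: "Min J \<in> J" "Max J \<in> J" using fin ne by auto
    have "Max J < n" using J mm unfolding is_block_def by auto
    then have cn: "c \<in> {0..<n} - J" using that c by auto
    have "Min J \<noteq> c" "Max J \<noteq> c" using mm c by auto
    then have lt: "Min J < c" "c < Max J" using that by auto
    have "\<not> separates v (Min J) c (Max J)" using J cn mm unfolding is_block_def by blast
    then show False using lt unfolding separates_def by simp
  qed
  moreover have "x \<in> J \<Longrightarrow> Min J \<le> x \<and> x \<le> Max J" for x using Min_le[OF fin] Max_ge[OF fin] by blast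
  ultimately show ?thesis by (intro set_eqI) (meson atLeastAtMost_iff)
qed

lemma inflation_coarsen:
  assumes inf: "inflation \<sigma> \<pi> f" and d: "distinct \<sigma>" and KS: "K \<subseteq> {0..<length \<sigma>}"
    and r_in: "\<And>c. c < length \<sigma> \<Longrightarrow> r c \<in> K" and r_id: "\<And>c. c \<in> K \<Longrightarrow> r c = c"
    and r_mono: "\<And>c c'. c \<le> c' \<Longrightarrow> r c \<le> r c'"
    and r_val: "\<And>c c'. c < length \<sigma> \<Longrightarrow> c' < length \<sigma> \<Longrightarrow> r c \<noteq> r c'
      \<Longrightarrow> \<sigma>!c < \<sigma>!c' \<longleftrightarrow> \<sigma>!(r c) < \<sigma>!(r c')"
  shows "\<exists>\<rho> f'. is_perm \<rho> \<and> length \<rho> = card K \<and> inflation \<rho> \<pi> f'"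
proof -
  have finK: "finite K" using KS finite_subset by blast
  obtain \<rho> where \<rho>: "is_perm \<rho>" "length \<rho> = card K" "order_emb \<rho> {0..<card K} \<sigma> K (nth_of K)"
    using standard_pattern[OF KS d] by blast
  define f' where "f' i = index_of K (r (f i))" for i
  note f = inflationD[OF inf]
  have \<rho>_val: "\<rho>!(index_of K x) < \<rho>!(index_of K y) \<longleftrightarrow> \<sigma>!x < \<sigma>!y" if "x \<in> K" "y \<in> K" for x y
  proof -
    have "index_of K x \<in> {0..<card K}" "index_of K y \<in> {0..<card K}"
      using index_of_less finK that by auto
    then show ?thesis using \<rho>(3) nth_of_index_of[OF finK] that unfolding order_emb_def by metis
  qed
  have "inflation \<rho> \<pi> f'"
    unfolding inflation_def
  proof (intro conjI allI impI)
    fix i assume "i < length \<pi>"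
    then show "f' i < length \<rho>" unfolding f'_def using \<rho>(2) index_of_less finK r_in f(1) by auto
  next
    fix c assume c: "c < length \<rho>"
    then have ec: "nth_of K c \<in> K" using nth_of_in finK \<rho>(2) by auto
    then have "nth_of K c < length \<sigma>" using KS by auto
    then obtain i where i: "i < length \<pi>" "f i = nth_of K c" using f(2) by blast
    have "f' i = c" unfolding f'_def i(2) r_id[OF ec] using index_of_nth_of finK c \<rho>(2) by auto
    then show "\<exists>i<length \<pi>. f' i = c" using i by blast
  next
    fix i j assume "i \<le> j" "j < length \<pi>"
    then show "f' i \<le> f' j" unfolding f'_def using f(3) r_mono index_of_mono finK by auto
  next
    fix i j assume ij: "i < length \<pi>" "j < length \<pi>" "f' i \<noteq> f' j"
    then have rr: "r (f i) \<noteq> r (f j)" unfolding f'_def by auto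
    then have "f i \<noteq> f j" by auto
    then have "\<pi>!i < \<pi>!j \<longleftrightarrow> \<sigma>!(f i) < \<sigma>!(f j)" using f(4) ij by auto
    also have "\<dots> \<longleftrightarrow> \<sigma>!(r (f i)) < \<sigma>!(r (f j))" using r_val f(1) ij rr by auto
    also have "\<dots> \<longleftrightarrow> \<rho>!(f' i) < \<rho>!(f' j)" unfolding f'_def using \<rho>_val r_in f(1) ij by auto
    finally show "\<pi>!i < \<pi>!j \<longleftrightarrow> \<rho>!(f' i) < \<rho>!(f' j)" .
  qed
  then show ?thesis using \<rho> by blast
qed

lemma block_representative:
  assumes d: "distinct \<sigma>" and J: "is_block ((!) \<sigma>) {0..<length \<sigma>} J"
    and a: "a \<in> J" and x: "x \<in> J" and y: "y < length \<sigma>" "y \<notin> J"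
  shows "\<sigma>!x < \<sigma>!y \<longleftrightarrow> \<sigma>!a < \<sigma>!y" and "\<sigma>!y < \<sigma>!x \<longleftrightarrow> \<sigma>!y < \<sigma>!a"
proof -
  have "\<not> separates ((!) \<sigma>) a y x" using J a x y unfolding is_block_def by auto
  moreover have "\<sigma>!y \<noteq> \<sigma>!x" "\<sigma>!y \<noteq> \<sigma>!a"
    using nth_eq_iff_index_eq[OF d] J a x y unfolding is_block_def by auto
  ultimately show "\<sigma>!x < \<sigma>!y \<longleftrightarrow> \<sigma>!a < \<sigma>!y" and "\<sigma>!y < \<sigma>!x \<longleftrightarrow> \<sigma>!y < \<sigma>!a"
    unfolding separates_def by auto
qed

text \<open>Collapsing a block J of the skeleton \<sigma> to its first point gives a skeleton that is
  shorter by card J - 1.\<close>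
lemma inflation_collapse:
  assumes inf: "inflation \<sigma> \<pi> f" and perm: "is_perm \<sigma>"
    and J: "is_block ((!) \<sigma>) {0..<length \<sigma>} J" and cJ: "2 \<le> card J"
  shows "\<exists>\<sigma>' f'. is_perm \<sigma>' \<and> length \<sigma>' = length \<sigma> + 1 - card J \<and> inflation \<sigma>' \<pi> f'"
proof -
  let ?n = "length \<sigma>"
  have d: "distinct \<sigma>" using perm unfolding is_perm_def by auto
  have JS: "J \<subseteq> {0..<?n}" using J unfolding is_block_def by auto
  have "J \<noteq> {}" using cJ by auto
  define a where "a = Min J"
  define b where "b = Max J"
  have Jab: "J = {a..b}" using block_contiguous[OF J \<open>J \<noteq> {}\<close>] a_def b_def by simp
  have ab: "a \<le> b" "b < ?n" "a \<in> J" using Jab JS \<open>J \<noteq> {}\<close> by auto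
  define r where "r c = (if c \<in> J then a else c)" for c
  define K where "K = {0..<?n} - {a<..b}"
  have "card K = card {0..<?n} - card {a<..b}"
    unfolding K_def using ab by (intro card_Diff_subset) auto
  then have "card K = ?n + 1 - card J" using Jab ab by simp
  moreover have "\<exists>\<rho> f'. is_perm \<rho> \<and> length \<rho> = card K \<and> inflation \<rho> \<pi> f'"
  proof (rule inflation_coarsen[OF inf d, of K r])
    show "K \<subseteq> {0..<?n}" unfolding K_def by auto
    show "r c \<in> K" if "c < ?n" for c using that ab Jab unfolding r_def K_def by auto
    show "r c = c" if "c \<in> K" for c using that Jab unfolding r_def K_def by auto
    show "r c \<le> r c'" if "c \<le> c'" for c c' using that Jab unfolding r_def by auto
    show "\<sigma>!c < \<sigma>!c' \<longleftrightarrow> \<sigma>!(r c) < \<sigma>!(r c')" if c: "c < ?n" "c' < ?n" "r c \<noteq> r c'" for c c'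
    proof (cases "c \<in> J")
      case True
      then have "c' \<notin> J" using c(3) unfolding r_def by auto
      with True show ?thesis
        using block_representative(1)[OF d J ab(3) True c(2)] unfolding r_def by simp
    next
      case False
      show ?thesis
      proof (cases "c' \<in> J")
        case True
        with False show ?thesis
          using block_representative(2)[OF d J ab(3) True c(1) False] unfolding r_def by simp
      qed (use False in \<open>simp add: r_def\<close>)
    qed
  qed
  ultimately show ?thesis by auto
qed

text \<open>Every list with distinct entries of length at least 2 is an inflation of a simple
  skeleton of length at least 2: a shortest skeleton of length at least 2 has no
  nontrivial block, since collapsing one would give a shorter skeleton.\<close>
lemma simple_skeleton_exists:
  assumes d: "distinct \<pi>" and n: "2 \<le> length \<pi>"
  shows "\<exists>\<sigma> f. is_perm \<sigma> \<and> 2 \<le> length \<sigma> \<and> simple_on ((!) \<sigma>) {0..<length \<sigma>}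
    \<and> inflation \<sigma> \<pi> f"
proof -
  define S where "S k \<longleftrightarrow> (\<exists>\<sigma> f. is_perm \<sigma> \<and> length \<sigma> = k \<and> 2 \<le> k \<and> inflation \<sigma> \<pi> f)" for k
  have "S (length \<pi>)" using inflation_trivial[OF d] n unfolding S_def by blast
  then obtain k where "S k" and k_least: "\<And>k'. S k' \<Longrightarrow> k \<le> k'"
    using ex_has_least_nat[of S "length \<pi>" id] by auto
  then obtain \<sigma> f where \<sigma>: "is_perm \<sigma>" "length \<sigma> = k" "2 \<le> k" "inflation \<sigma> \<pi> f"
    unfolding S_def by blast
  have "simple_on ((!) \<sigma>) {0..<length \<sigma>}"
    unfolding simple_on_def
  proof (intro allI impI)
    fix J assume J: "is_block ((!) \<sigma>) {0..<length \<sigma>} J"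
    show "card J \<le> 1 \<or> J = {0..<length \<sigma>}"
    proof (rule ccontr)
      assume "\<not> (card J \<le> 1 \<or> J = {0..<length \<sigma>})"
      then have cJ: "2 \<le> card J" "J \<noteq> {0..<length \<sigma>}" by auto
      have "J \<subset> {0..<length \<sigma>}" using J cJ(2) unfolding is_block_def by auto
      then have "card J < length \<sigma>" using psubset_card_mono[of "{0..<length \<sigma>}" J] by simp
      then have "S (length \<sigma> + 1 - card J)"
        using inflation_collapse[OF \<sigma>(4) \<sigma>(1) J cJ(1)] unfolding S_def by auto
      then have "k \<le> length \<sigma> + 1 - card J" using k_least by blast
      then show False using \<sigma>(2,3) cJ(1) by simp
    qed
  qed
  then show ?thesis using \<sigma> by blast
qed

text \<open>The skeleton is a pattern of its inflation (take one point from each segment).\<close>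
lemma skeleton_contained:
  assumes inf: "inflation \<sigma> \<pi> f"
  shows "\<exists>r. order_emb \<sigma> {0..<length \<sigma>} \<pi> {0..<length \<pi>} r"
proof -
  note ip = inflationD[OF inf]
  define r where "r c = (LEAST i. i < length \<pi> \<and> f i = c)" for c
  have rr: "r c < length \<pi> \<and> f (r c) = c" if "c < length \<sigma>" for c
    unfolding r_def using ip(2)[OF that] by (metis (mono_tags, lifting) LeastI)
  have "order_emb \<sigma> {0..<length \<sigma>} \<pi> {0..<length \<pi>} r"
    unfolding order_emb_def
  proof (intro conjI ballI impI)
    fix c assume "c \<in> {0..<length \<sigma>}" then show "r c \<in> {0..<length \<pi>}" using rr by auto
  next
    fix c d assume cd: "c \<in> {0..<length \<sigma>}" "d \<in> {0..<length \<sigma>}" "c < d"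
    show "r c < r d"
    proof (rule ccontr)
      assume "\<not> r c < r d"
      then have le: "r d \<le> r c" by simp
      have "c < length \<sigma>" using cd by auto
      then have "r c < length \<pi>" using rr by blast
      then have "f (r d) \<le> f (r c)" using ip(3)[OF le] by blast
      then show False using rr cd by auto
    qed
  next
    fix c d assume cd: "c \<in> {0..<length \<sigma>}" "d \<in> {0..<length \<sigma>}"
    show "\<sigma>!c < \<sigma>!d \<longleftrightarrow> \<pi>!(r c) < \<pi>!(r d)"
    proof (cases "c = d")
      case False
      then show ?thesis using ip(4)[of "r c" "r d"] rr cd by auto
    qed simp
  qed
  then show ?thesis by blast
qed

lemma segment_subset: "segment \<pi> f c \<subseteq> {0..<length \<pi>}"
  unfolding segment_def by auto

lemma segment_smaller:
  assumes inf: "inflation \<sigma> \<pi> f" and s2: "2 \<le> length \<sigma>" and c: "c < length \<sigma>"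
  shows "length (nths \<pi> (segment \<pi> f c)) < length \<pi>"
proof -
  note ip = inflationD[OF inf]
  have "(if c = 0 then 1 else 0) < length \<sigma>" "(if c = 0 then 1 else 0) \<noteq> c" using s2 c by auto
  then obtain c' where c': "c' < length \<sigma>" "c' \<noteq> c" by blast
  obtain i where i: "i < length \<pi>" "f i = c'" using ip(2)[OF c'(1)] by blast
  have "segment \<pi> f c \<subset> {0..<length \<pi>}" using segment_subset i c' unfolding segment_def by auto
  then have "card (segment \<pi> f c) < card {0..<length \<pi>}" by (intro psubset_card_mono) auto
  then have "card (segment \<pi> f c) < length \<pi>" by simp
  then show ?thesis using length_nths_subset[OF segment_subset] by simp
qed

lemma glue_segment_embeddings:
  assumes inf: "inflation \<sigma> \<pi> f" and inf': "inflation \<sigma> \<pi>' f'"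
    and H: "\<And>c. c < length \<sigma> \<Longrightarrow> order_emb \<pi> (segment \<pi> f c) \<pi>' (segment \<pi>' f' c) (H c)"
  shows "order_emb \<pi> {0..<length \<pi>} \<pi>' {0..<length \<pi>'} (\<lambda>i. H (f i) i)"
    (is "order_emb _ _ _ _ ?G")
proof -
  note ip = inflationD[OF inf] and ip' = inflationD[OF inf']
  have G_in: "?G i < length \<pi>' \<and> f' (?G i) = f i" if "i < length \<pi>" for i
    using H[OF ip(1)[OF that]] that unfolding order_emb_def segment_def by auto
  have same: "?G i < ?G j \<longleftrightarrow> i < j" "\<pi>!i < \<pi>!j \<longleftrightarrow> \<pi>'!(?G i) < \<pi>'!(?G j)"
    if "i < length \<pi>" "j < length \<pi>" "f i = f j" for i j
  proof -
    have "i \<in> segment \<pi> f (f i)" "j \<in> segment \<pi> f (f i)" using that unfolding segment_def by auto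
    then show "?G i < ?G j \<longleftrightarrow> i < j" "\<pi>!i < \<pi>!j \<longleftrightarrow> \<pi>'!(?G i) < \<pi>'!(?G j)"
      using H[OF ip(1)[OF that(1)]] that(3) order_emb_less_iff unfolding order_emb_def by auto
  qed
  show ?thesis
    unfolding order_emb_def
  proof (intro conjI ballI impI)
    fix i assume "i \<in> {0..<length \<pi>}" then show "?G i \<in> {0..<length \<pi>'}" using G_in by auto
  next
    fix i j assume ij: "i \<in> {0..<length \<pi>}" "j \<in> {0..<length \<pi>}" "i < j"
    show "?G i < ?G j"
    proof (cases "f i = f j")
      case False
      then have "f' (?G i) < f' (?G j)" using ip(3)[of i j] G_in ij by fastforce
      then show ?thesis using ip'(3)[of "?G j" "?G i"] G_in ij by (meson atLeastLessThan_iff not_le)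
    qed (use same ij in auto)
  next
    fix i j assume ij: "i \<in> {0..<length \<pi>}" "j \<in> {0..<length \<pi>}"
    show "\<pi>!i < \<pi>!j \<longleftrightarrow> \<pi>'!(?G i) < \<pi>'!(?G j)"
    proof (cases "f i = f j")
      case False
      then have "\<pi>!i < \<pi>!j \<longleftrightarrow> \<sigma>!(f i) < \<sigma>!(f j)" using ip(4) ij by auto
      also have "\<dots> \<longleftrightarrow> \<pi>'!(?G i) < \<pi>'!(?G j)" using ip'(4)[of "?G i" "?G j"] G_in ij False by auto
      finally show ?thesis .
    qed (use same ij in auto)
  qed
qed

lemma inflation_mono:
  assumes inf: "inflation \<sigma> \<pi> f" and inf': "inflation \<sigma> \<pi>' f'"
    and ch: "\<forall>c<length \<sigma>. nths \<pi> (segment \<pi> f c) \<preceq> nths \<pi>' (segment \<pi>' f' c)"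
  shows "\<pi> \<preceq> \<pi>'"
proof -
  have "\<forall>c<length \<sigma>. \<exists>h. order_emb \<pi> (segment \<pi> f c) \<pi>' (segment \<pi>' f' c) h"
    using ch nths_contains_iff[OF segment_subset segment_subset] by blast
  then obtain H
    where H: "\<And>c. c < length \<sigma> \<Longrightarrow> order_emb \<pi> (segment \<pi> f c) \<pi>' (segment \<pi>' f' c) (H c)"
    by metis
  show ?thesis unfolding contains_iff_emb using glue_segment_embeddings[OF inf inf' H] by blast
qed
locale decomposable_order =
  fixes le :: "'a \<Rightarrow> 'a \<Rightarrow> bool" and A :: "'a set" and sz :: "'a \<Rightarrow> nat"
    and lab :: "'a \<Rightarrow> 'l" and L :: "'l set" and ar :: "'l \<Rightarrow> nat" and ch :: "'a \<Rightarrow> nat \<Rightarrow> 'a"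
  assumes trans: "\<And>x y z. x \<in> A \<Longrightarrow> y \<in> A \<Longrightarrow> z \<in> A \<Longrightarrow> le x y \<Longrightarrow> le y z \<Longrightarrow> le x z"
    and finL: "finite L" and labL: "\<And>x. x \<in> A \<Longrightarrow> lab x \<in> L"
    and chA: "\<And>x c. x \<in> A \<Longrightarrow> c < ar (lab x) \<Longrightarrow> ch x c \<in> A"
    and chsz: "\<And>x c. x \<in> A \<Longrightarrow> c < ar (lab x) \<Longrightarrow> sz (ch x c) < sz x"
    and chle: "\<And>x c. x \<in> A \<Longrightarrow> c < ar (lab x) \<Longrightarrow> le (ch x c) x"
    and mono: "\<And>x y. x \<in> A \<Longrightarrow> y \<in> A \<Longrightarrow> lab x = lab y
      \<Longrightarrow> (\<forall>c<ar (lab x). le (ch x c) (ch y c)) \<Longrightarrow> le x y"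
begin

definition good :: "(nat \<Rightarrow> 'a) \<Rightarrow> bool" where
  "good f \<longleftrightarrow> (\<exists>i j. i < j \<and> le (f i) (f j))"

definition bad :: "(nat \<Rightarrow> 'a) \<Rightarrow> bool" where
  "bad f \<longleftrightarrow> (\<forall>i. f i \<in> A) \<and> \<not> good f"

text \<open>The minimal bad sequence is built term by term: each term is a smallest possible
  continuation of the prefix chosen so far to a bad sequence.\<close>
definition bad_continuations :: "'a list \<Rightarrow> 'a set" where
  "bad_continuations l = {g (length l) | g. bad g \<and> (\<forall>i<length l. g i = l ! i)}"

definition min_continuation :: "'a list \<Rightarrow> 'a" where
  "min_continuation l =
     (SOME x. x \<in> bad_continuations l \<and> (\<forall>y\<in>bad_continuations l. sz x \<le> sz y))"

fun min_bad_prefix :: "nat \<Rightarrow> 'a list" where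
  "min_bad_prefix 0 = []"
| "min_bad_prefix (Suc n) = min_bad_prefix n @ [min_continuation (min_bad_prefix n)]"

definition min_bad :: "nat \<Rightarrow> 'a" where
  "min_bad n = min_continuation (min_bad_prefix n)"

lemma length_min_bad_prefix: "length (min_bad_prefix n) = n"
  by (induction n) auto

lemma nth_min_bad_prefix: "i < n \<Longrightarrow> min_bad_prefix n ! i = min_bad i"
proof (induction n)
  case (Suc n)
  then show ?case using length_min_bad_prefix[of n] unfolding min_bad_def
    by (cases "i = n") (auto simp: nth_append)
qed simp

lemma min_continuation:
  assumes "bad_continuations l \<noteq> {}"
  shows "min_continuation l \<in> bad_continuations l"
    and "\<And>y. y \<in> bad_continuations l \<Longrightarrow> sz (min_continuation l) \<le> sz y"
proof -
  obtain x0 where "x0 \<in> bad_continuations l" using assms by blast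
  then obtain x where "x \<in> bad_continuations l" "\<forall>y. y \<in> bad_continuations l \<longrightarrow> sz x \<le> sz y"
    using ex_has_least_nat[of "\<lambda>x. x \<in> bad_continuations l" x0 sz] by blast
  then have "\<exists>x. x \<in> bad_continuations l \<and> (\<forall>y\<in>bad_continuations l. sz x \<le> sz y)" by blast
  then have "min_continuation l \<in> bad_continuations l
      \<and> (\<forall>y\<in>bad_continuations l. sz (min_continuation l) \<le> sz y)"
    unfolding min_continuation_def by (rule someI_ex)
  then show "min_continuation l \<in> bad_continuations l"
    and "\<And>y. y \<in> bad_continuations l \<Longrightarrow> sz (min_continuation l) \<le> sz y" by blast+
qed

lemma bad_continuations_nonempty:
  assumes ex: "\<exists>g. bad g"
  shows "bad_continuations (min_bad_prefix n) \<noteq> {}"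
proof (induction n)
  case 0
  then show ?case using ex unfolding bad_continuations_def by auto
next
  case (Suc n)
  let ?p = "min_bad_prefix n"
  have "min_continuation ?p \<in> bad_continuations ?p" by (rule min_continuation(1)[OF Suc])
  then obtain g where g: "bad g" "\<forall>i<n. g i = ?p ! i" "g n = min_continuation ?p"
    unfolding bad_continuations_def using length_min_bad_prefix by auto
  have "\<forall>i<Suc n. g i = min_bad_prefix (Suc n) ! i"
  proof (intro allI impI)
    fix i assume "i < Suc n"
    then show "g i = min_bad_prefix (Suc n) ! i"
      using g length_min_bad_prefix[of n] by (cases "i = n") (auto simp: nth_append)
  qed
  then have "bad g \<and> (\<forall>i<length (min_bad_prefix (Suc n)). g i = min_bad_prefix (Suc n) ! i)"
    using g(1) length_min_bad_prefix by simp
  then have "g (length (min_bad_prefix (Suc n))) \<in> bad_continuations (min_bad_prefix (Suc n))"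
    unfolding bad_continuations_def by blast
  then show ?case by blast
qed

lemma min_bad_props:
  assumes ex: "\<exists>g. bad g"
  shows "bad min_bad"
    and "\<And>g n. bad g \<Longrightarrow> (\<forall>i<n. g i = min_bad i) \<Longrightarrow> sz (min_bad n) \<le> sz (g n)"
proof -
  have agree: "\<exists>g. bad g \<and> (\<forall>i\<le>j. g i = min_bad i)" for j
  proof -
    obtain g where g: "bad g" "\<forall>i<Suc j. g i = min_bad_prefix (Suc j) ! i"
      using bad_continuations_nonempty[OF ex, of "Suc j"] length_min_bad_prefix
      unfolding bad_continuations_def by auto
    have "\<forall>i\<le>j. g i = min_bad i"
    proof (intro allI impI)
      fix i assume "i \<le> j" then have ij: "i < Suc j" by simp
      show "g i = min_bad i"
        using g(2)[rule_format, OF ij] nth_min_bad_prefix[OF ij] by (simp del: min_bad_prefix.simps)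
    qed
    then show ?thesis using g(1) by blast
  qed
  show "bad min_bad"
    unfolding bad_def good_def
  proof (intro conjI allI notI)
    fix i
    obtain g where "bad g" "\<forall>k\<le>i. g k = min_bad k" using agree by blast
    then show "min_bad i \<in> A" unfolding bad_def by (metis order_refl)
  next
    assume "\<exists>i j. i < j \<and> le (min_bad i) (min_bad j)"
    then obtain i j where ij: "i < j" "le (min_bad i) (min_bad j)" by blast
    obtain g where g: "bad g" "\<forall>k\<le>j. g k = min_bad k" using agree by blast
    then have "le (g i) (g j)" using ij by auto
    then show False using g(1) ij(1) unfolding bad_def good_def by blast
  qed
  fix g n assume g: "bad g" "\<forall>i<n. g i = min_bad i"
  have "g n \<in> bad_continuations (min_bad_prefix n)"
    unfolding bad_continuations_def using g length_min_bad_prefix nth_min_bad_prefix by auto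
  then show "sz (min_bad n) \<le> sz (g n)"
    using min_continuation(2)[OF bad_continuations_nonempty[OF ex]] unfolding min_bad_def by blast
qed

text \<open>If all sequences in H are good, then in every sequence in H all terms from some
  index on lie below a later term: the terms without such a successor form a subsequence
  that is not good, so there are only finitely many.\<close>
lemma eventually_below_later:
  fixes s :: "nat \<Rightarrow> 'a"
  assumes Hg: "\<forall>h. (\<forall>k. h k \<in> H) \<longrightarrow> good h" and s: "\<forall>k. s k \<in> H"
  shows "\<exists>N. \<forall>i\<ge>N. \<exists>j>i. le (s i) (s j)"
proof -
  define T where "T = {i. \<forall>j>i. \<not> le (s i) (s j)}"
  have "finite T"
  proof (rule ccontr)
    assume "infinite T"
    then obtain r :: "nat \<Rightarrow> nat" where r: "strict_mono r" "\<forall>n. r n \<in> T"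
      using infinite_enumerate by blast
    have "good (s \<circ> r)" using Hg s by auto
    then obtain i j where "i < j" "le (s (r i)) (s (r j))" unfolding good_def by auto
    moreover have "r i < r j" using r(1) \<open>i < j\<close> by (simp add: strict_monoD)
    ultimately show False using r(2) unfolding T_def by blast
  qed
  then obtain N where "\<forall>i\<ge>N. i \<notin> T"
    by (metis finite_nat_set_iff_bounded_le not_less_eq_eq le_trans)
  then show ?thesis unfolding T_def by auto
qed

text \<open>Consequently every sequence in H has an increasing subsequence, obtained by
  repeatedly jumping to a later term above the current one.\<close>
lemma chain_subsequence:
  fixes s :: "nat \<Rightarrow> 'a"
  assumes HA: "H \<subseteq> A" and Hg: "\<forall>h. (\<forall>k. h k \<in> H) \<longrightarrow> good h" and s: "\<forall>k. s k \<in> H"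
  shows "\<exists>\<phi>::nat\<Rightarrow>nat. strict_mono \<phi> \<and> (\<forall>i j. i < j \<longrightarrow> le (s (\<phi> i)) (s (\<phi> j)))"
proof -
  obtain N where step: "\<And>i. i \<ge> N \<Longrightarrow> \<exists>j>i. le (s i) (s j)"
    using eventually_below_later[OF Hg s] by blast
  define nx where "nx i = (SOME j. j > i \<and> le (s i) (s j))" for i
  have nxp: "nx i > i \<and> le (s i) (s (nx i))" if "i \<ge> N" for i
    unfolding nx_def using someI_ex[OF step[OF that]] .
  define \<phi> where "\<phi> k = (nx ^^ k) N" for k
  have phiS: "\<phi> (Suc k) = nx (\<phi> k)" for k unfolding \<phi>_def by simp
  have phiN: "\<phi> k \<ge> N" for k
  proof (induction k)
    case 0 then show ?case unfolding \<phi>_def by simp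
  next
    case (Suc k) then show ?case using nxp[of "\<phi> k"] phiS by auto
  qed
  have sm: "strict_mono \<phi>"
    by (rule strict_mono_Suc_iff[THEN iffD2]) (use nxp phiN phiS in auto)
  have chain: "le (s (\<phi> i)) (s (\<phi> j))" if "i < j" for i j
    using that
  proof (induction j)
    case 0 then show ?case by simp
  next
    case (Suc j)
    have step: "le (s (\<phi> j)) (s (\<phi> (Suc j)))" using nxp[OF phiN[of j]] phiS by simp
    show ?case
    proof (cases "i = j")
      case False
      then have "le (s (\<phi> i)) (s (\<phi> j))" using Suc by auto
      moreover have "s (\<phi> i) \<in> A" "s (\<phi> j) \<in> A" "s (\<phi> (Suc j)) \<in> A" using s HA by auto
      ultimately show ?thesis using trans step by blast
    qed (use step in simp)
  qed
  then show ?thesis using sm by blast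
qed

lemma simultaneous_chain_subsequence:
  fixes S :: "nat \<Rightarrow> nat \<Rightarrow> 'a"
  assumes HA: "H \<subseteq> A" and Hg: "\<forall>h. (\<forall>k. h k \<in> H) \<longrightarrow> good h"
  shows "(\<forall>c<r. \<forall>k. S c k \<in> H) \<Longrightarrow>
    \<exists>\<phi>::nat\<Rightarrow>nat. strict_mono \<phi> \<and> (\<forall>c<r. \<forall>i j. i < j \<longrightarrow> le (S c (\<phi> i)) (S c (\<phi> j)))"
proof (induction r)
  case 0
  have "strict_mono (id :: nat \<Rightarrow> nat)" by (simp add: strict_mono_def)
  then show ?case by blast
next
  case (Suc r)
  have "\<forall>c<r. \<forall>k. S c k \<in> H" using Suc.prems by auto
  then obtain \<phi> :: "nat \<Rightarrow> nat"
    where phi: "strict_mono \<phi>" "\<forall>c<r. \<forall>i j. i < j \<longrightarrow> le (S c (\<phi> i)) (S c (\<phi> j))"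
    using Suc.IH by blast
  have "\<forall>k. S r (\<phi> k) \<in> H" using Suc.prems by auto
  from chain_subsequence[OF HA Hg this] obtain \<psi> :: "nat \<Rightarrow> nat"
    where psi: "strict_mono \<psi>" "\<forall>i j. i < j \<longrightarrow> le (S r (\<phi> (\<psi> i))) (S r (\<phi> (\<psi> j)))"
    by blast
  have "strict_mono (\<phi> \<circ> \<psi>)" using phi(1) psi(1) by (simp add: strict_mono_def)
  moreover have "\<forall>c<Suc r. \<forall>i j. i < j \<longrightarrow> le (S c ((\<phi> \<circ> \<psi>) i)) (S c ((\<phi> \<circ> \<psi>) j))"
  proof (intro allI impI)
    fix c :: nat and i j :: nat assume c: "c < Suc r" and ij: "i < j"
    show "le (S c ((\<phi> \<circ> \<psi>) i)) (S c ((\<phi> \<circ> \<psi>) j))"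
    proof (cases "c = r")
      case True then show ?thesis using psi ij by simp
    next
      case False
      then have "c < r" using c by simp
      moreover have "\<psi> i < \<psi> j" using psi(1) ij by (simp add: strict_monoD)
      ultimately show ?thesis using phi(2) by simp
    qed
  qed
  ultimately show ?case by blast
qed

lemma splice_bad:
  assumes f: "bad f" and h: "bad h" and below: "\<And>k. \<exists>i\<ge>i0. le (h k) (f i)"
  shows "bad (\<lambda>i. if i < i0 then f i else h (k0 + (i - i0)))" (is "bad ?g")
proof -
  have fA: "\<And>i. f i \<in> A" and hA: "\<And>k. h k \<in> A" using f h unfolding bad_def by auto
  have "\<not> le (?g i) (?g j)" if ij: "i < j" for i j
  proof (cases "j < i0")
    case True
    then show ?thesis using f ij unfolding bad_def good_def by auto
  next
    case j: False
    show ?thesis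
    proof (cases "i < i0")
      case True
      obtain i' where i': "i' \<ge> i0" "le (h (k0 + (j - i0))) (f i')" using below by blast
      have "\<not> le (f i) (f i')" using f True i'(1) unfolding bad_def good_def by auto
      then show ?thesis using trans[OF fA hA fA _ i'(2)] True j by auto
    next
      case False
      then show ?thesis using h ij j unfolding bad_def good_def by auto
    qed
  qed
  then show ?thesis using fA hA unfolding bad_def good_def by auto
qed

definition min_bad_children :: "'a set" where
  "min_bad_children = {ch (min_bad i) c | i c. c < ar (lab (min_bad i))}"

text \<open>Every sequence of children of the minimal bad sequence is good: otherwise splice it
  in at the first parent index i0 it uses, obtaining a bad sequence that agrees with
  min_bad below i0 but has a smaller term at i0.\<close>
lemma min_bad_children_good:
  assumes ex: "\<exists>g. bad g" and hH: "\<forall>k. h k \<in> min_bad_children"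
  shows "good h"
proof (rule ccontr)
  assume "\<not> good h"
  note mb = min_bad_props[OF ex]
  have mA: "\<And>i. min_bad i \<in> A" using mb(1) unfolding bad_def by auto
  have "\<forall>k. \<exists>i c. c < ar (lab (min_bad i)) \<and> h k = ch (min_bad i) c"
    using hH unfolding min_bad_children_def by blast
  then obtain ix cc
    where ixc: "\<And>k. cc k < ar (lab (min_bad (ix k))) \<and> h k = ch (min_bad (ix k)) (cc k)"
    by metis
  have "h k \<in> A" for k using chA[OF mA] ixc by metis
  then have hA: "bad h" using \<open>\<not> good h\<close> unfolding bad_def by blast
  define i0 where "i0 = (LEAST i. \<exists>k. ix k = i)"
  have "\<exists>k. ix k = i0" unfolding i0_def by (rule LeastI_ex) blast
  then obtain k0 where k0: "ix k0 = i0" by blast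
  have i0_min: "i0 \<le> ix k" for k unfolding i0_def by (rule Least_le) blast
  have "le (h k) (min_bad (ix k))" for k using chle[OF mA] ixc by metis
  then have "\<exists>i\<ge>i0. le (h k) (min_bad i)" for k using i0_min by blast
  then have "bad (\<lambda>i. if i < i0 then min_bad i else h (k0 + (i - i0)))" (is "bad ?g")
    by (rule splice_bad[OF mb(1) hA])
  then have "sz (min_bad i0) \<le> sz (?g i0)" by (rule mb(2)) simp
  then have "sz (min_bad i0) \<le> sz (h k0)" by simp
  moreover have "sz (h k0) < sz (min_bad i0)" using ixc[of k0] k0 chsz[OF mA] by metis
  ultimately show False by simp
qed

text \<open>In the minimal bad sequence infinitely
  many terms share a label; along a subsequence all their children form chains, and then
  monotonicity makes two of these terms comparable.\<close>
theorem all_sequences_good: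
  assumes fA: "\<forall>i. f i \<in> A"
  shows "good f"
proof (rule ccontr)
  assume "\<not> good f"
  then have ex: "\<exists>g. bad g" using fA unfolding bad_def by blast
  note mb = min_bad_props[OF ex]
  have mA: "\<And>i. min_bad i \<in> A" and mbad: "\<not> good min_bad" using mb(1) unfolding bad_def by auto
  have HA: "min_bad_children \<subseteq> A" unfolding min_bad_children_def using chA mA by blast
  have Hg: "\<forall>h. (\<forall>k. h k \<in> min_bad_children) \<longrightarrow> good h"
    using min_bad_children_good[OF ex] by blast
  have "finite ((\<lambda>i. lab (min_bad i)) ` UNIV)"
    using labL mA finL by (metis finite_subset image_subset_iff)
  then obtain a0 where "infinite {a. lab (min_bad a) = lab (min_bad a0)}"
    using pigeonhole_infinite[of "UNIV :: nat set" "\<lambda>i. lab (min_bad i)"] by auto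
  then obtain r :: "nat \<Rightarrow> nat" where r: "strict_mono r" "\<forall>n. lab (min_bad (r n)) = lab (min_bad a0)"
    using infinite_enumerate by blast
  define l where "l = lab (min_bad a0)"
  define S where "S c k = ch (min_bad (r k)) c" for c k
  have "\<forall>c<ar l. \<forall>k. S c k \<in> min_bad_children"
  proof (intro allI impI)
    fix c k assume "c < ar l"
    then have "c < ar (lab (min_bad (r k)))" using r(2) l_def by simp
    then show "S c k \<in> min_bad_children" unfolding S_def min_bad_children_def by blast
  qed
  then obtain \<phi> :: "nat \<Rightarrow> nat" where
    phi: "strict_mono \<phi>" "\<forall>c<ar l. \<forall>i j. i < j \<longrightarrow> le (S c (\<phi> i)) (S c (\<phi> j))"
    using simultaneous_chain_subsequence[OF HA Hg] by blast
  let ?a = "r (\<phi> 0)" and ?b = "r (\<phi> 1)"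
  have "le (min_bad ?a) (min_bad ?b)"
    by (rule mono[OF mA mA]) (use r(2) phi(2) l_def S_def in auto)
  moreover have "?a < ?b" using r(1) phi(1) by (simp add: strict_monoD)
  ultimately show False using mbad unfolding good_def by blast
qed

end

text \<open>The permutations all of whose simple point subsets have at most m points.  These
  form the well-quasi-ordered set that contains the non-simple basis elements.\<close>
definition few_simples :: "nat \<Rightarrow> nat list set" where
  "few_simples m = {\<pi>. distinct \<pi> \<and>
     (\<forall>T. T \<subseteq> {0..<length \<pi>} \<and> simple_on ((!) \<pi>) T \<longrightarrow> card T \<le> m)}"

text \<open>A chosen decomposition of a permutation of length at least 2 as an inflation of a
  simple skeleton, and the resulting labelled-tree structure: the label of a node is its
  skeleton (short permutations get a dummy label), and its children are the patterns of
  the segments.\<close>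
definition decomposition :: "nat list \<Rightarrow> nat list \<times> (nat \<Rightarrow> nat)" where
  "decomposition \<pi> = (SOME p. is_perm (fst p) \<and> 2 \<le> length (fst p)
     \<and> simple_on ((!) (fst p)) {0..<length (fst p)} \<and> inflation (fst p) \<pi> (snd p))"

definition node_label :: "nat list \<Rightarrow> nat list" where
  "node_label \<pi> = (if 2 \<le> length \<pi> then fst (decomposition \<pi>) else replicate (length \<pi>) 0)"

definition arity :: "nat list \<Rightarrow> nat" where
  "arity l = (if 2 \<le> length l then length l else 0)"

definition segment_pattern :: "nat list \<Rightarrow> nat \<Rightarrow> nat list" where
  "segment_pattern \<pi> c = nths \<pi> (segment \<pi> (snd (decomposition \<pi>)) c)"

lemma decomposition:
  assumes "distinct \<pi>" "2 \<le> length \<pi>"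
  shows "is_perm (fst (decomposition \<pi>))" "2 \<le> length (fst (decomposition \<pi>))"
    "simple_on ((!) (fst (decomposition \<pi>))) {0..<length (fst (decomposition \<pi>))}"
    "inflation (fst (decomposition \<pi>)) \<pi> (snd (decomposition \<pi>))"
proof -
  obtain \<sigma> f where "is_perm \<sigma> \<and> 2 \<le> length \<sigma> \<and> simple_on ((!) \<sigma>) {0..<length \<sigma>} \<and> inflation \<sigma> \<pi> f"
    using simple_skeleton_exists[OF assms] by blast
  then have "\<exists>p. is_perm (fst p) \<and> 2 \<le> length (fst p) \<and> simple_on ((!) (fst p)) {0..<length (fst p)}
      \<and> inflation (fst p) \<pi> (snd p)"
    by (intro exI[of _ "(\<sigma>, f)"]) simp
  then have "is_perm (fst (decomposition \<pi>)) \<and> 2 \<le> length (fst (decomposition \<pi>))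
    \<and> simple_on ((!) (fst (decomposition \<pi>))) {0..<length (fst (decomposition \<pi>))}
    \<and> inflation (fst (decomposition \<pi>)) \<pi> (snd (decomposition \<pi>))"
    unfolding decomposition_def by (rule someI_ex)
  then show "is_perm (fst (decomposition \<pi>))" "2 \<le> length (fst (decomposition \<pi>))"
    "simple_on ((!) (fst (decomposition \<pi>))) {0..<length (fst (decomposition \<pi>))}"
    "inflation (fst (decomposition \<pi>)) \<pi> (snd (decomposition \<pi>))" by blast+
qed

lemma simple_on_image:
  assumes h: "order_emb p A q B h" and T: "T \<subseteq> A" "simple_on ((!) p) T"
  shows "simple_on ((!) q) (h ` T)" "h ` T \<subseteq> B" "card (h ` T) = card T"
proof -
  show "simple_on ((!) q) (h ` T)" using simple_on_emb[OF h T(1)] T(2) by simp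
  show "h ` T \<subseteq> B" using h T(1) unfolding order_emb_def by auto
  show "card (h ` T) = card T" using order_emb_inj[OF h] T(1) by (metis card_image inj_on_subset)
qed

lemma few_simples_downward:
  assumes "\<pi> \<in> few_simples m" "\<rho> \<preceq> \<pi>" "distinct \<rho>"
  shows "\<rho> \<in> few_simples m"
proof -
  obtain h where h: "order_emb \<rho> {0..<length \<rho>} \<pi> {0..<length \<pi>} h"
    using assms(2) unfolding contains_iff_emb by blast
  have "card T \<le> m" if T: "T \<subseteq> {0..<length \<rho>}" "simple_on ((!) \<rho>) T" for T
  proof -
    note img = simple_on_image[OF h T]
    then have "card (h ` T) \<le> m" using assms(1) unfolding few_simples_def by blast
    then show ?thesis using img(3) by simp
  qed
  then show ?thesis using assms(3) unfolding few_simples_def by blast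
qed

text \<open>The skeleton of a permutation in few_simples m is a simple subpattern, so it has at
  most m points; hence there are only finitely many labels.\<close>
lemma skeleton_length_bound:
  assumes "\<pi> \<in> few_simples m" "2 \<le> length \<pi>"
  shows "length (fst (decomposition \<pi>)) \<le> m"
proof -
  let ?\<sigma> = "fst (decomposition \<pi>)"
  have d: "distinct \<pi>" using assms unfolding few_simples_def by auto
  note dec = decomposition[OF d assms(2)]
  obtain r where r: "order_emb ?\<sigma> {0..<length ?\<sigma>} \<pi> {0..<length \<pi>} r"
    using skeleton_contained dec(4) by blast
  note img = simple_on_image[OF r order_refl dec(3)]
  then have "card (r ` {0..<length ?\<sigma>}) \<le> m" using assms(1) unfolding few_simples_def by blast
  then show ?thesis using img(3) by simp
qed

lemma short_contains:
  assumes "length \<sigma> = length \<pi>" "length \<pi> \<le> 1"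
  shows "\<sigma> \<preceq> \<pi>"
proof -
  have "nths \<pi> {0..<length \<pi>} = \<pi>" by (rule nths_all) simp
  moreover have "i = 0" if "i < length \<pi>" for i using that assms(2) by simp
  then have "order_iso \<sigma> \<pi>" using assms(1) unfolding order_iso_def by auto
  ultimately show ?thesis unfolding contains_def by (metis order_refl)
qed

lemma node_label_mono:
  assumes dx: "distinct x" and dy: "distinct y" and lab: "node_label x = node_label y"
    and ch: "\<forall>c<arity (node_label x). segment_pattern x c \<preceq> segment_pattern y c"
  shows "x \<preceq> y"
proof (cases "2 \<le> length x")
  case True
  note dx' = decomposition[OF dx True]
  have y2: "2 \<le> length y"
  proof (rule ccontr)
    assume "\<not> 2 \<le> length y"
    then show False using lab dx'(2) True unfolding node_label_def by auto
  qed
  note dy' = decomposition[OF dy y2]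
  have same: "fst (decomposition x) = fst (decomposition y)"
    using lab True y2 unfolding node_label_def by simp
  have "\<forall>c<length (fst (decomposition x)). nths x (segment x (snd (decomposition x)) c)
      \<preceq> nths y (segment y (snd (decomposition y)) c)"
    using ch dx'(2) True unfolding segment_pattern_def arity_def node_label_def by auto
  then show ?thesis using inflation_mono dx'(4) dy'(4) same by metis
next
  case False
  have "\<not> 2 \<le> length y"
  proof
    assume y2: "2 \<le> length y"
    have "length (node_label x) < 2" using False by (simp add: node_label_def)
    moreover have "2 \<le> length (node_label y)"
      using y2 decomposition(2)[OF dy y2] by (simp add: node_label_def)
    ultimately show False using lab by simp
  qed
  then have "length x = length y"
    using lab False unfolding node_label_def by (metis length_replicate)
  then show ?thesis using False by (intro short_contains) auto
qed

definition labels :: "nat \<Rightarrow> nat list set" where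
  "labels m = {l. set l \<subseteq> {0..<m + 2} \<and> length l \<le> m + 2}"

lemma few_simples_decomposable:
  "decomposable_order (\<preceq>) (few_simples m) length node_label (labels m) arity segment_pattern"
proof
  show "\<And>x y z. x \<preceq> y \<Longrightarrow> y \<preceq> z \<Longrightarrow> x \<preceq> z" by (rule contains_trans)
  show "finite (labels m)" unfolding labels_def by (rule finite_lists_length_le) simp
next
  fix x assume x: "x \<in> few_simples m"
  have d: "distinct x" using x unfolding few_simples_def by auto
  show "node_label x \<in> labels m"
  proof (cases "2 \<le> length x")
    case True
    then show ?thesis using decomposition(1)[OF d True] skeleton_length_bound[OF x True]
      unfolding node_label_def labels_def is_perm_def by auto
  qed (auto simp: node_label_def labels_def)
  fix c assume c: "c < arity (node_label x)"
  then have x2: "2 \<le> length x" unfolding node_label_def arity_def by (auto split: if_splits)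
  have cl: "c < length (fst (decomposition x))"
    using c x2 unfolding node_label_def arity_def by (auto split: if_splits)
  show "segment_pattern x c \<preceq> x"
    unfolding segment_pattern_def by (rule nths_contained[OF segment_subset])
  then show "segment_pattern x c \<in> few_simples m"
    using few_simples_downward[OF x] d unfolding segment_pattern_def by simp
  show "length (segment_pattern x c) < length x"
    unfolding segment_pattern_def using segment_smaller decomposition[OF d x2] cl by blast
next
  fix x y assume "x \<in> few_simples m" "y \<in> few_simples m" "node_label x = node_label y"
    "\<forall>c<arity (node_label x). segment_pattern x c \<preceq> segment_pattern y c"
  then show "x \<preceq> y" using node_label_mono unfolding few_simples_def by blast
qed

lemma few_simples_wqo:
  fixes f :: "nat \<Rightarrow> nat list"
  assumes "\<forall>i. f i \<in> few_simples m"
  shows "\<exists>i j. i < j \<and> f i \<preceq> f j"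
proof -
  interpret W: decomposable_order "(\<preceq>)" "few_simples m" length node_label "labels m" arity
    segment_pattern by (rule few_simples_decomposable)
  from W.all_sequences_good[OF assms] show ?thesis unfolding W.good_def by blast
qed

lemma simple_subpattern:
  assumes \<pi>: "is_perm \<pi>" and T: "T \<subseteq> {0..<length \<pi>}" "simple_on ((!) \<pi>) T"
  shows "\<exists>\<rho>. simple \<rho> \<and> length \<rho> = card T \<and> \<rho> \<preceq> \<pi>"
proof -
  obtain \<rho> where \<rho>: "is_perm \<rho>" "length \<rho> = card T" "order_emb \<rho> {0..<card T} \<pi> T (nth_of T)"
    using standard_pattern[OF T(1)] \<pi> unfolding is_perm_def by blast
  have "finite T" using T finite_subset by blast
  then have "simple_on ((!) \<rho>) {0..<card T}"
    using simple_on_emb[OF \<rho>(3) order_refl] nth_of_image T(2) by simp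
  then have "simple \<rho>" using simple_on_imp_simple \<rho> by simp
  moreover have "\<rho> \<preceq> \<pi>" unfolding contains_iff_emb using order_emb_mono[OF \<rho>(3) _ T(1)] \<rho>(2) by auto
  ultimately show ?thesis using \<rho> by blast
qed

text \<open>If the simple permutations of C have length at most m, then so do all proper simple
  point subsets of a basis element: they give proper subpatterns, which lie in C.\<close>
lemma basis_proper_simple_bounded:
  assumes m: "\<And>\<sigma>. \<sigma> \<in> C \<Longrightarrow> simple \<sigma> \<Longrightarrow> length \<sigma> \<le> m" and \<beta>: "\<beta> \<in> basis C"
    and T: "T \<subseteq> {0..<length \<beta>}" "T \<noteq> {0..<length \<beta>}" "simple_on ((!) \<beta>) T"
  shows "card T \<le> m"
proof -
  have "is_perm \<beta>" using \<beta> unfolding basis_def by blast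
  then obtain \<rho> where \<rho>: "simple \<rho>" "length \<rho> = card T" "\<rho> \<preceq> \<beta>"
    using simple_subpattern T(1,3) by blast
  have "card T < card {0..<length \<beta>}" using T(1,2) by (intro psubset_card_mono) auto
  then have "\<rho> \<noteq> \<beta>" using \<rho>(2) by auto
  moreover have "is_perm \<rho>" using \<rho>(1) unfolding simple_def by blast
  ultimately have "\<rho> \<in> C" using \<beta> \<rho>(3) unfolding basis_def by blast
  then show ?thesis using m[OF _ \<rho>(1)] \<rho>(2) by simp
qed

lemma simple_basis_element_bounded:
  assumes m: "\<And>\<sigma>. \<sigma> \<in> C \<Longrightarrow> simple \<sigma> \<Longrightarrow> length \<sigma> \<le> m" and \<beta>: "\<beta> \<in> basis C"
    and s: "simple_on ((!) \<beta>) {0..<length \<beta>}"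
  shows "length \<beta> \<le> max 4 (m + 2)"
proof (rule simple_length_bound[OF _ s])
  have "distinct \<beta>" using \<beta> unfolding basis_def is_perm_def by blast
  then show "inj_on ((!) \<beta>) {0..<length \<beta>}" by (simp add: inj_on_def nth_eq_iff_index_eq)
  show "\<forall>T. T \<subseteq> {0..<length \<beta>} \<and> T \<noteq> {0..<length \<beta>} \<and> simple_on ((!) \<beta>) T \<longrightarrow> card T \<le> m"
    using basis_proper_simple_bounded[OF m \<beta>] by blast
qed

lemma nonsimple_basis_element_few_simples:
  assumes m: "\<And>\<sigma>. \<sigma> \<in> C \<Longrightarrow> simple \<sigma> \<Longrightarrow> length \<sigma> \<le> m" and \<beta>: "\<beta> \<in> basis C"
    and ns: "\<not> simple_on ((!) \<beta>) {0..<length \<beta>}"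
  shows "\<beta> \<in> few_simples m"
proof -
  have "card T \<le> m" if T: "T \<subseteq> {0..<length \<beta>}" "simple_on ((!) \<beta>) T" for T
  proof -
    have "T \<noteq> {0..<length \<beta>}" using T(2) ns by blast
    then show ?thesis using basis_proper_simple_bounded[OF m \<beta> T(1) _ T(2)] by blast
  qed
  moreover have "distinct \<beta>" using \<beta> unfolding basis_def is_perm_def by blast
  ultimately show ?thesis unfolding few_simples_def by blast
qed

lemma basis_antichain:
  assumes "\<beta> \<in> basis C" "\<beta>' \<in> basis C" "\<beta> \<preceq> \<beta>'"
  shows "\<beta> = \<beta>'"
  using assms unfolding basis_def by blast

lemma finite_antichain:
  fixes le :: "'a \<Rightarrow> 'a \<Rightarrow> bool"
  assumes good: "\<And>f :: nat \<Rightarrow> 'a. \<forall>i. f i \<in> A \<Longrightarrow> \<exists>i j. i < j \<and> le (f i) (f j)"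
    and BA: "B \<subseteq> A" and anti: "\<And>x y. x \<in> B \<Longrightarrow> y \<in> B \<Longrightarrow> le x y \<Longrightarrow> x = y"
  shows "finite B"
proof (rule ccontr)
  assume "infinite B"
  then obtain f :: "nat \<Rightarrow> 'a" where f: "inj f" "range f \<subseteq> B"
    using infinite_countable_subset by blast
  then have "\<forall>i. f i \<in> A" using BA by auto
  then obtain i j where ij: "i < j" "le (f i) (f j)" using good[of f] by blast
  moreover have "f i \<in> B" "f j \<in> B" using f(2) by auto
  ultimately have "f i = f j" using anti by blast
  then show False using f(1) ij(1) by (simp add: inj_eq)
qed

lemma finite_simple_basis_elements:
  assumes m: "\<And>\<sigma>. \<sigma> \<in> C \<Longrightarrow> simple \<sigma> \<Longrightarrow> length \<sigma> \<le> m"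
  shows "finite {\<beta>\<in>basis C. simple_on ((!) \<beta>) {0..<length \<beta>}}" (is "finite ?S")
proof -
  define N where "N = max 4 (m + 2)"
  have "set \<beta> \<subseteq> {0..<N} \<and> length \<beta> \<le> N" if \<beta>: "\<beta> \<in> ?S" for \<beta>
  proof -
    have "length \<beta> \<le> N" using simple_basis_element_bounded[OF m] \<beta> unfolding N_def by blast
    moreover have "set \<beta> = {0..<length \<beta>}" using \<beta> unfolding basis_def is_perm_def by blast
    ultimately show ?thesis by auto
  qed
  then have "?S \<subseteq> {xs. set xs \<subseteq> {0..<N} \<and> length xs \<le> N}" by blast
  then show ?thesis by (rule finite_subset) (rule finite_lists_length_le, simp)
qed

text \<open>Only finitely many basis elements are non-simple: they form an antichain in the
  well-quasi-ordered set few_simples m.\<close>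
lemma finite_nonsimple_basis_elements:
  assumes m: "\<And>\<sigma>. \<sigma> \<in> C \<Longrightarrow> simple \<sigma> \<Longrightarrow> length \<sigma> \<le> m"
  shows "finite {\<beta>\<in>basis C. \<not> simple_on ((!) \<beta>) {0..<length \<beta>}}" (is "finite ?B")
proof (rule finite_antichain[where le = "(\<preceq>)"])
  show "\<exists>i j. i < j \<and> f i \<preceq> f j" if "\<forall>i. f i \<in> few_simples m" for f :: "nat \<Rightarrow> nat list"
    using few_simples_wqo[OF that] .
  show "?B \<subseteq> few_simples m" using nonsimple_basis_element_few_simples[OF m] by blast
  show "x = y" if "x \<in> ?B" "y \<in> ?B" "x \<preceq> y" for x y
    using that basis_antichain[of x C y] by simp
qed

theorem mainTheorem8:
  assumes "perm_class C"
    and "finite {\<pi>\<in>C. simple \<pi>}"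
  shows "finite (basis C)"
proof -
  define m where "m = Max (insert 0 (length ` {\<pi>\<in>C. simple \<pi>}))"
  have m: "length \<sigma> \<le> m" if "\<sigma> \<in> C" "simple \<sigma>" for \<sigma>
    unfolding m_def using assms(2) that by (intro Max_ge) auto
  have "basis C \<subseteq> {\<beta>\<in>basis C. simple_on ((!) \<beta>) {0..<length \<beta>}}
      \<union> {\<beta>\<in>basis C. \<not> simple_on ((!) \<beta>) {0..<length \<beta>}}" by blast
  then show ?thesis
    by (rule finite_subset)
      (use finite_simple_basis_elements[OF m] finite_nonsimple_basis_elements[OF m] in simp)
qed

end
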